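(* Every generalized Baumslag–Solitar group is extraterrestrial.
   Context: A generalized Baumslag–Solitar group is a group admitting a faithful cocompact action by automorphisms, without edge inversions, on a tree, with all edge and vertex stabilizers infinite cyclic (for instance $\mathrm{BS}(m,n)=\langle a,b\mid ba^mb^{-1}=a^n\rangle$, $m,n\ne0$). A finitely generated group is extraterrestrial if its Cayley graph with respect to some (equivalently any) finite symmetric generating set is extraterrestrial, where a graph $G=(V,E)$ is extraterrestrial if for every $m$ there is $k$ such that for every $r$ there is a triple $(U,F,O)$ of pairwise disjoint finite vertex sets with $U\neq\emptyset$, $|U|\ge m|F|$, a bijection $\mu:U\to O$ with $d_G(u,\mu(u))\le k$, and every path from $U$ to $O$ either contains a vertex of $F$ or has length at least $r$. *)

theory Defs
  imports "HOL-Algebra.Algebra"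
begin

text \<open>A walk in the graph (V,E): a nonempty list of vertices, consecutive ones adjacent.
  Its length (number of edges) is length p - 1.\<close>
definition graph_walk :: "'v set \<Rightarrow> ('v \<times> 'v) set \<Rightarrow> 'v list \<Rightarrow> bool" where
  "graph_walk V E p \<longleftrightarrow> p \<noteq> [] \<and> set p \<subseteq> V \<and>
     (\<forall>i. Suc i < length p \<longrightarrow> (p ! i, p ! Suc i) \<in> E)"

definition graph_dist_le :: "'v set \<Rightarrow> ('v \<times> 'v) set \<Rightarrow> 'v \<Rightarrow> 'v \<Rightarrow> nat \<Rightarrow> bool" where
  "graph_dist_le V E u v k \<longleftrightarrow>
     (\<exists>p. graph_walk V E p \<and> hd p = u \<and> last p = v \<and> length p - 1 \<le> k)"

definition extraterrestrial_graph :: "'v set \<Rightarrow> ('v \<times> 'v) set \<Rightarrow> bool" where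
  "extraterrestrial_graph V E \<longleftrightarrow>
    (\<forall>m::nat. \<exists>k::nat. \<forall>r::nat. \<exists>U F W (\<mu>::'v \<Rightarrow> 'v).
       U \<subseteq> V \<and> F \<subseteq> V \<and> W \<subseteq> V \<and> finite U \<and> finite F \<and> finite W \<and>
       U \<inter> F = {} \<and> U \<inter> W = {} \<and> F \<inter> W = {} \<and>
       U \<noteq> {} \<and> card U \<ge> m * card F \<and>
       bij_betw \<mu> U W \<and> (\<forall>u\<in>U. graph_dist_le V E u (\<mu> u) k) \<and>
       (\<forall>p. graph_walk V E p \<and> hd p \<in> U \<and> last p \<in> W \<longrightarrow>
            set p \<inter> F \<noteq> {} \<or> length p - 1 \<ge> r))"

definition is_tree :: "'v set \<Rightarrow> ('v \<times> 'v) set \<Rightarrow> bool" where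
  "is_tree V E \<longleftrightarrow> V \<noteq> {} \<and> E \<subseteq> V \<times> V \<and> sym E \<and> irrefl E \<and>
     (\<forall>u\<in>V. \<forall>v\<in>V. \<exists>p. graph_walk V E p \<and> hd p = u \<and> last p = v) \<and>
     \<not> (\<exists>p. graph_walk V E p \<and> length p \<ge> 3 \<and> distinct p \<and> (last p, hd p) \<in> E)"

definition cayley_edges :: "('g, 'b) monoid_scheme \<Rightarrow> 'g set \<Rightarrow> ('g \<times> 'g) set" where
  "cayley_edges G S = {(g, g \<otimes>\<^bsub>G\<^esub> s) | g s. g \<in> carrier G \<and> s \<in> S}"

definition finite_symmetric_generating_set :: "('g, 'b) monoid_scheme \<Rightarrow> 'g set \<Rightarrow> bool" where
  "finite_symmetric_generating_set G S \<longleftrightarrow> S \<subseteq> carrier G \<and> finite S \<and>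
     (\<forall>s\<in>S. inv\<^bsub>G\<^esub> s \<in> S) \<and> generate G S = carrier G"

definition extraterrestrial_group :: "('g, 'b) monoid_scheme \<Rightarrow> bool" where
  "extraterrestrial_group G \<longleftrightarrow>
     (\<exists>S. finite_symmetric_generating_set G S \<and>
          extraterrestrial_graph (carrier G) (cayley_edges G S))"

definition infinite_cyclic_subgroup :: "('g, 'b) monoid_scheme \<Rightarrow> 'g set \<Rightarrow> bool" where
  "infinite_cyclic_subgroup G H \<longleftrightarrow> infinite H \<and>
     (\<exists>a\<in>carrier G. H = {a [^]\<^bsub>G\<^esub> (k::int) | k. True})"

definition tree_action :: "('g, 'b) monoid_scheme \<Rightarrow> 'v set \<Rightarrow> ('v \<times> 'v) set \<Rightarrow> ('g \<Rightarrow> 'v \<Rightarrow> 'v) \<Rightarrow> bool" where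
  "tree_action G V E act \<longleftrightarrow>
     (\<forall>g\<in>carrier G. bij_betw (act g) V V \<and>
        (\<forall>u\<in>V. \<forall>v\<in>V. (u, v) \<in> E \<longleftrightarrow> (act g u, act g v) \<in> E)) \<and>
     (\<forall>v\<in>V. act \<one>\<^bsub>G\<^esub> v = v) \<and>
     (\<forall>g\<in>carrier G. \<forall>h\<in>carrier G. \<forall>v\<in>V. act (g \<otimes>\<^bsub>G\<^esub> h) v = act g (act h v))"

definition vertex_stabilizer :: "('g, 'b) monoid_scheme \<Rightarrow> ('g \<Rightarrow> 'v \<Rightarrow> 'v) \<Rightarrow> 'v \<Rightarrow> 'g set" where
  "vertex_stabilizer G act v = {g \<in> carrier G. act g v = v}"

definition edge_stabilizer :: "('g, 'b) monoid_scheme \<Rightarrow> ('g \<Rightarrow> 'v \<Rightarrow> 'v) \<Rightarrow> 'v \<times> 'v \<Rightarrow> 'g set" where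
  "edge_stabilizer G act e = {g \<in> carrier G. act g (fst e) = fst e \<and> act g (snd e) = snd e}"

definition GBS_action :: "('g, 'b) monoid_scheme \<Rightarrow> 'v set \<Rightarrow> ('v \<times> 'v) set \<Rightarrow> ('g \<Rightarrow> 'v \<Rightarrow> 'v) \<Rightarrow> bool" where
  "GBS_action G V E act \<longleftrightarrow>
     is_tree V E \<and> tree_action G V E act \<and>
     \<comment> \<open>faithful\<close>
     (\<forall>g\<in>carrier G. (\<forall>v\<in>V. act g v = v) \<longrightarrow> g = \<one>\<^bsub>G\<^esub>) \<and>
     \<comment> \<open>cocompact: finitely many orbits of vertices and of edges\<close>
     (\<exists>FV. finite FV \<and> FV \<subseteq> V \<and> V = {act g v | g v. g \<in> carrier G \<and> v \<in> FV}) \<and>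
     (\<exists>FE. finite FE \<and> FE \<subseteq> E \<and>
        E = {(act g u, act g v) | g u v. g \<in> carrier G \<and> (u, v) \<in> FE}) \<and>
     \<comment> \<open>no edge inversions\<close>
     (\<forall>g\<in>carrier G. \<forall>(u, v)\<in>E. \<not> (act g u = v \<and> act g v = u)) \<and>
     (\<forall>v\<in>V. infinite_cyclic_subgroup G (vertex_stabilizer G act v)) \<and>
     (\<forall>e\<in>E. infinite_cyclic_subgroup G (edge_stabilizer G act e))"

end

theory Submission
  imports Defs
begin

(*
  Vertex stabilizers of adjacent vertices are commensurable, so any two vertex stabilizers
  intersect nontrivially; hence the tree is locally finite and the group is finitely generated.
  Faithfulness then yields an edge (x, n) and c in Stab(x) moving n such that the branch of the
  tree at x through n is infinite and meets an orbit G b in infinitely many points, which can be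
  taken far from x and in distinct Stab(x)-orbits.

  Let z be nontrivial in Stab(x) and Stab(n), and let the f_i map b to such points. The translates
  U = {z^j f_i} and W = {z^j c f_(N+i)}, |j| <= L, i < N, are matched at bounded Cayley distance.
  The orbit map g |-> g b turns a Cayley path from U to W into a tree path from the branch at n to
  the branch at c n, which must pass near x; so the path meets the wall of elements g with g b
  near x. The wall is a finite union of cosets of Stab(b), each commensurated into Stab(x), so
  its part within distance r of U has size O(L), with a constant independent of N, while U has
  (2L + 1) N elements.
*)

lemma finite_common_bound:
  fixes P :: "'a \<Rightarrow> nat \<Rightarrow> bool"
  assumes "finite I" "\<And>i. i \<in> I \<Longrightarrow> \<exists>d. P i d" "\<And>i d d'. P i d \<Longrightarrow> d \<le> d' \<Longrightarrow> P i d'"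
  obtains D where "\<And>i. i \<in> I \<Longrightarrow> P i D"
proof -
  obtain d where d: "\<And>i. i \<in> I \<Longrightarrow> P i (d i)" using assms(2) by metis
  have "P i (sum d I)" if "i \<in> I" for i
    using assms(3)[OF d[OF that] member_le_sum[of i I d]] assms(1) that by simp
  then show thesis by (rule that)
qed

lemma infinite_pairwise_unrelated_choice:
  fixes N :: nat
  assumes "infinite Y" "\<And>y. y \<in> Y \<Longrightarrow> finite (R y)"
    and "\<And>y y'. y \<in> Y \<Longrightarrow> y' \<in> Y \<Longrightarrow> y' \<in> R y \<Longrightarrow> y \<in> R y'"
  shows "\<exists>f. (\<forall>i<N. f i \<in> Y) \<and> (\<forall>i<N. \<forall>i'<N. i \<noteq> i' \<longrightarrow> f i' \<notin> R (f i))"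
proof (induction N)
  case (Suc N)
  then obtain f where f: "\<forall>i<N. f i \<in> Y" "\<forall>i<N. \<forall>i'<N. i \<noteq> i' \<longrightarrow> f i' \<notin> R (f i)"
    by blast
  have "infinite (Y - (\<Union>i<N. R (f i)))"
    using assms(1,2) f(1) by (simp add: Diff_infinite_finite)
  then obtain z where "z \<in> Y - (\<Union>i<N. R (f i))" using infinite_imp_nonempty by blast
  then have z: "z \<in> Y" "\<forall>i<N. z \<notin> R (f i)" by auto
  then have "\<forall>i<N. f i \<notin> R z" using assms(3) f(1) by blast
  then show ?case
    using f z by (intro exI[of _ "f(N := z)"]) (auto simp: less_Suc_eq)
qed simp

section \<open>Walks and the graph metric\<close>

lemma graph_walk_Nil [simp]: "\<not> graph_walk V E []"
  by (simp add: graph_walk_def)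

lemma graph_walk_singleton [simp]: "graph_walk V E [x] \<longleftrightarrow> x \<in> V"
  by (simp add: graph_walk_def)

lemma graph_walk_Cons_Cons [simp]:
  "graph_walk V E (x # y # p) \<longleftrightarrow> x \<in> V \<and> (x, y) \<in> E \<and> graph_walk V E (y # p)"
proof
  assume "graph_walk V E (x # y # p)"
  then have "(x, y) \<in> E" and "\<forall>i. Suc i < length (y # p) \<longrightarrow> ((y # p) ! i, (y # p) ! Suc i) \<in> E"
    unfolding graph_walk_def by (fastforce, metis Suc_less_eq length_Cons nth_Cons_Suc)
  with \<open>graph_walk V E (x # y # p)\<close> show "x \<in> V \<and> (x, y) \<in> E \<and> graph_walk V E (y # p)"
    by (simp add: graph_walk_def)
next
  assume "x \<in> V \<and> (x, y) \<in> E \<and> graph_walk V E (y # p)"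
  then show "graph_walk V E (x # y # p)"
    unfolding graph_walk_def by (auto simp: less_Suc_eq_0_disj)
qed

lemma graph_walk_Cons_iff:
  "graph_walk V E (x # p) \<longleftrightarrow> x \<in> V \<and> (p = [] \<or> graph_walk V E p \<and> (x, hd p) \<in> E)"
  by (cases p) auto

lemma graph_walk_vertices: "graph_walk V E p \<Longrightarrow> set p \<subseteq> V"
  by (simp add: graph_walk_def)

lemma graph_walk_append_iff:
  assumes "xs \<noteq> []" "ys \<noteq> []"
  shows "graph_walk V E (xs @ ys) \<longleftrightarrow> graph_walk V E xs \<and> graph_walk V E ys \<and> (last xs, hd ys) \<in> E"
  using assms by (induction xs) (auto simp: graph_walk_Cons_iff)

lemma graph_walk_join:
  assumes p: "graph_walk V E p" and q: "graph_walk V E q" and pq: "last p = hd q"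
  shows "graph_walk V E (p @ tl q)" "hd (p @ tl q) = hd p" "last (p @ tl q) = last q"
    "set (p @ tl q) \<subseteq> set p \<union> set q" "length (p @ tl q) = length p + length q - 1"
proof -
  obtain y q' where q': "q = y # q'" using q by (cases q) auto
  have "p \<noteq> []" using p by auto
  then show "graph_walk V E (p @ tl q)"
    using p q pq q' by (cases "q' = []") (auto simp: graph_walk_append_iff graph_walk_Cons_iff)
  show "hd (p @ tl q) = hd p" using p by (cases p) auto
  show "last (p @ tl q) = last q" using pq q' by (cases "q' = []") auto
  show "set (p @ tl q) \<subseteq> set p \<union> set q" "length (p @ tl q) = length p + length q - 1"
    using q' by auto
qed

lemma graph_walk_rev:
  assumes "sym E" "graph_walk V E p"
  shows "graph_walk V E (rev p)"
  using assms(2)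
proof (induction p)
  case (Cons x p)
  show ?case
  proof (cases "p = []")
    case False
    then have "graph_walk V E p" "(hd p, x) \<in> E" "x \<in> V"
      using Cons.prems assms(1) by (auto simp: graph_walk_Cons_iff dest: symD)
    with False Cons.IH show ?thesis by (simp add: graph_walk_append_iff last_rev)
  qed (use Cons in simp)
qed simp

lemma graph_walk_map:
  assumes "f ` V \<subseteq> V" "\<And>u v. (u, v) \<in> E \<Longrightarrow> (f u, f v) \<in> E" "graph_walk V E p"
  shows "graph_walk V E (map f p)"
  using assms(3) by (induction p) (use assms(1,2) in \<open>auto simp: graph_walk_Cons_iff hd_map\<close>)

lemma graph_walk_invariant:
  assumes "graph_walk V E p" "P (hd p)" "\<And>v w. v \<in> V \<Longrightarrow> P v \<Longrightarrow> (v, w) \<in> E \<Longrightarrow> P w"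
  shows "\<forall>x\<in>set p. P x"
  using assms(1,2) by (induction p) (use assms(3) in \<open>auto simp: graph_walk_Cons_iff\<close>)

lemma graph_walk_distinct:
  assumes "graph_walk V E p"
  obtains q where "graph_walk V E q" "distinct q" "hd q = hd p" "last q = last p" "set q \<subseteq> set p"
  using assms
proof (induction "length p" arbitrary: p rule: less_induct)
  case less
  show ?case
  proof (cases "distinct p")
    case False
    then obtain ys zs us a where p: "p = ys @ [a] @ zs @ [a] @ us"
      using not_distinct_decomp by blast
    have "graph_walk V E (ys @ [a])"
      using less.prems p by (cases "ys = []") (auto simp: graph_walk_append_iff graph_walk_Cons_iff)
    moreover have "graph_walk V E ([a] @ us)"
      using less.prems p graph_walk_append_iff[of "ys @ [a] @ zs" "[a] @ us"] by simp
    ultimately have "graph_walk V E (ys @ [a] @ us)"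
      using graph_walk_join(1)[of V E "ys @ [a]" "[a] @ us"] by simp
    moreover have "hd (ys @ [a] @ us) = hd p" "last (ys @ [a] @ us) = last p"
      "set (ys @ [a] @ us) \<subseteq> set p" "length (ys @ [a] @ us) < length p"
      unfolding p by (cases ys; auto)+
    ultimately show ?thesis using less.hyps less.prems(1) by (metis order.trans)
  qed (use less.prems in blast)
qed

lemma graph_dist_le_refl: "x \<in> V \<Longrightarrow> graph_dist_le V E x x d"
  unfolding graph_dist_le_def by (rule exI[of _ "[x]"]) simp

lemma graph_dist_le_mono: "graph_dist_le V E x y d \<Longrightarrow> d \<le> d' \<Longrightarrow> graph_dist_le V E x y d'"
  unfolding graph_dist_le_def by auto

lemma graph_dist_le_vertices: "graph_dist_le V E x y d \<Longrightarrow> x \<in> V \<and> y \<in> V"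
  unfolding graph_dist_le_def graph_walk_def using hd_in_set last_in_set by blast

lemma graph_dist_le_edge: "(x, y) \<in> E \<Longrightarrow> x \<in> V \<Longrightarrow> y \<in> V \<Longrightarrow> graph_dist_le V E x y 1"
  unfolding graph_dist_le_def by (rule exI[of _ "[x, y]"]) simp

lemma graph_dist_le_sym: "sym E \<Longrightarrow> graph_dist_le V E x y d \<Longrightarrow> graph_dist_le V E y x d"
  unfolding graph_dist_le_def by (metis graph_walk_rev hd_rev last_rev length_rev)

lemma graph_dist_le_trans:
  "graph_dist_le V E x y d1 \<Longrightarrow> graph_dist_le V E y z d2 \<Longrightarrow> graph_dist_le V E x z (d1 + d2)"
  unfolding graph_dist_le_def
proof (elim exE conjE)
  fix p q assume "graph_walk V E p" "hd p = x" "last p = y" "length p - 1 \<le> d1"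
    "graph_walk V E q" "hd q = y" "last q = z" "length q - 1 \<le> d2"
  then show "\<exists>p. graph_walk V E p \<and> hd p = x \<and> last p = z \<and> length p - 1 \<le> d1 + d2"
    using graph_walk_join[of V E p q] by (intro exI[of _ "p @ tl q"]) auto
qed

lemma graph_dist_le_map:
  assumes "f ` V \<subseteq> V" "\<And>u v. (u, v) \<in> E \<Longrightarrow> (f u, f v) \<in> E" "graph_dist_le V E x y d"
  shows "graph_dist_le V E (f x) (f y) d"
  using assms(3) graph_walk_map[OF assms(1,2)] unfolding graph_dist_le_def
  by (metis graph_walk_Nil hd_map last_map length_map)

lemma graph_dist_le_walk_member:
  assumes "graph_walk V E p" "x \<in> set p" "length p - 1 \<le> r"
  shows "graph_dist_le V E (hd p) x r"
proof -
  obtain i where i: "i < length p" "p ! i = x" using assms(2) by (metis in_set_conv_nth)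
  have "graph_walk V E (take (Suc i) p)"
    using assms(1) unfolding graph_walk_def by (auto dest: in_set_takeD)
  moreover have "hd (take (Suc i) p) = hd p" "last (take (Suc i) p) = x"
    using i by (cases p, simp_all add: take_Suc_conv_app_nth)
  ultimately show ?thesis
    unfolding graph_dist_le_def using i assms(3) by (intro exI[of _ "take (Suc i) p"]) auto
qed

definition walled_matching ::
  "'v set \<Rightarrow> ('v \<times> 'v) set \<Rightarrow> 'v set \<Rightarrow> nat \<Rightarrow> nat \<Rightarrow> nat \<Rightarrow> 'v set \<Rightarrow> 'v set \<Rightarrow> ('v \<Rightarrow> 'v) \<Rightarrow> bool"
  where "walled_matching V E Z m k r U W \<mu> \<longleftrightarrow>
    U \<subseteq> V \<and> W \<subseteq> V \<and> finite U \<and> U \<noteq> {} \<and> U \<inter> W = {} \<and> U \<inter> Z = {} \<and> W \<inter> Z = {} \<and>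
    bij_betw \<mu> U W \<and> (\<forall>u\<in>U. graph_dist_le V E u (\<mu> u) k) \<and>
    (\<forall>p. graph_walk V E p \<and> hd p \<in> U \<and> last p \<in> W \<longrightarrow> set p \<inter> Z \<noteq> {}) \<and>
    finite {v \<in> Z. \<exists>u\<in>U. graph_dist_le V E u v r} \<and>
    m * card {v \<in> Z. \<exists>u\<in>U. graph_dist_le V E u v r} \<le> card U"

text \<open>A walk from \<open>U\<close> to \<open>W\<close> shorter than \<open>r\<close> meets \<open>Z\<close> within distance \<open>r\<close> of its start,
  so the part of \<open>Z\<close> near \<open>U\<close> serves as the set \<open>F\<close>.\<close>

lemma extraterrestrial_graphI:
  assumes "\<And>m. \<exists>k. \<forall>r. \<exists>U W \<mu>. walled_matching V E Z m k r U W \<mu>"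
  shows "extraterrestrial_graph V E"
  unfolding extraterrestrial_graph_def
proof (intro allI)
  fix m
  obtain k where k: "\<forall>r. \<exists>U W \<mu>. walled_matching V E Z m k r U W \<mu>" using assms by blast
  show "\<exists>k. \<forall>r. \<exists>U F W \<mu>. U \<subseteq> V \<and> F \<subseteq> V \<and> W \<subseteq> V \<and> finite U \<and> finite F \<and> finite W \<and>
       U \<inter> F = {} \<and> U \<inter> W = {} \<and> F \<inter> W = {} \<and> U \<noteq> {} \<and> m * card F \<le> card U \<and>
       bij_betw \<mu> U W \<and> (\<forall>u\<in>U. graph_dist_le V E u (\<mu> u) k) \<and>
       (\<forall>p. graph_walk V E p \<and> hd p \<in> U \<and> last p \<in> W \<longrightarrow> set p \<inter> F \<noteq> {} \<or> r \<le> length p - 1)"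
  proof (intro exI[of _ k] allI)
    fix r
    obtain U W \<mu> where M: "walled_matching V E Z m k r U W \<mu>" using k by blast
    define F where "F = {v \<in> Z. \<exists>u\<in>U. graph_dist_le V E u v r}"
    have UW: "U \<subseteq> V" "W \<subseteq> V" "finite U" "U \<noteq> {}" "U \<inter> W = {}" "bij_betw \<mu> U W"
      "\<forall>u\<in>U. graph_dist_le V E u (\<mu> u) k" "finite F" "m * card F \<le> card U"
      using M unfolding walled_matching_def F_def by auto
    have "finite W" using UW(3,6) bij_betw_finite by blast
    have F: "F \<subseteq> V" "U \<inter> F = {}" "F \<inter> W = {}"
      using M unfolding walled_matching_def F_def by (auto dest: graph_dist_le_vertices)
    have paths: "\<forall>p. graph_walk V E p \<and> hd p \<in> U \<and> last p \<in> W \<longrightarrow> set p \<inter> F \<noteq> {} \<or> r \<le> length p - 1"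
    proof (intro allI impI disjCI)
      fix p assume p: "graph_walk V E p \<and> hd p \<in> U \<and> last p \<in> W" and "\<not> r \<le> length p - 1"
      moreover obtain v where "v \<in> set p" "v \<in> Z"
        using M p unfolding walled_matching_def by blast
      ultimately have "graph_dist_le V E (hd p) v r"
        using graph_dist_le_walk_member[of V E p] by simp
      then have "v \<in> F" unfolding F_def using p \<open>v \<in> Z\<close> by blast
      then show "set p \<inter> F \<noteq> {}" using \<open>v \<in> set p\<close> by blast
    qed
    show "\<exists>U F W \<mu>. U \<subseteq> V \<and> F \<subseteq> V \<and> W \<subseteq> V \<and> finite U \<and> finite F \<and> finite W \<and>
       U \<inter> F = {} \<and> U \<inter> W = {} \<and> F \<inter> W = {} \<and> U \<noteq> {} \<and> m * card F \<le> card U \<and>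
       bij_betw \<mu> U W \<and> (\<forall>u\<in>U. graph_dist_le V E u (\<mu> u) k) \<and>
       (\<forall>p. graph_walk V E p \<and> hd p \<in> U \<and> last p \<in> W \<longrightarrow> set p \<inter> F \<noteq> {} \<or> r \<le> length p - 1)"
      by (intro exI[of _ U] exI[of _ F] exI[of _ W] exI[of _ \<mu>] conjI) (fact UW F paths \<open>finite W\<close>)+
  qed
qed

section \<open>Infinite cyclic subgroups and commensurated cosets\<close>

lemma (in group) infinite_cyclic_subgroup_int_pow_inj:
  assumes "infinite_cyclic_subgroup G H" "a \<in> carrier G" "H = {a [^] (k::int) | k. True}"
  shows "inj (\<lambda>k::int. a [^] k)"
proof -
  have "H = carrier (subgroup_generated G {a})"
    using assms(2,3) by (simp add: carrier_subgroup_generated generate_pow)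
  then show ?thesis
    using assms(1) infinite_cyclic_subgroup_int[OF assms(2)]
    by (auto simp: infinite_cyclic_subgroup_def inj_def)
qed

lemma (in group) int_pow_conj:
  assumes "h \<in> carrier G" "x \<in> carrier G"
  shows "(h \<otimes> x \<otimes> inv h) [^] (k::int) = h \<otimes> x [^] k \<otimes> inv h"
proof -
  have "(\<lambda>y. h \<otimes> y \<otimes> inv h) \<in> hom G G"
  proof (intro homI)
    have cancel: "inv h \<otimes> (h \<otimes> z) = z" if "z \<in> carrier G" for z
      using assms(1) that by (simp add: m_assoc[symmetric])
    show "h \<otimes> (x \<otimes> y) \<otimes> inv h = h \<otimes> x \<otimes> inv h \<otimes> (h \<otimes> y \<otimes> inv h)"
      if "x \<in> carrier G" "y \<in> carrier G" for x y
      using assms(1) that by (simp add: m_assoc cancel)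
  qed (use assms(1) in simp)
  from hom_int_pow[OF this assms(2) is_group is_group] show ?thesis by simp
qed

lemma (in group) int_pow_exponent_bound:
  assumes "inj (\<lambda>k::int. a [^] k)" "finite K"
  obtains M where "\<And>k::int. a [^] k \<in> K \<Longrightarrow> \<bar>k\<bar> \<le> M"
proof
  let ?A = "(\<lambda>k::int. a [^] k) -` K"
  show "\<bar>k\<bar> \<le> (\<Sum>e\<in>?A. \<bar>e\<bar>)" if "a [^] k \<in> K" for k :: int
    using member_le_sum[of k ?A abs] finite_vimageI[OF assms(2,1)] that by simp
qed

lemma (in group) commensurated_coset_shift:
  fixes P Q t \<rho> :: int
  assumes a: "a \<in> carrier G" and h: "h \<in> carrier G" and \<beta>: "\<beta> \<in> carrier G"
    and PQ: "a [^] P = h \<otimes> \<beta> [^] Q \<otimes> inv h"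
  shows "h \<otimes> \<beta> [^] (Q * t + \<rho>) = a [^] (P * t) \<otimes> (h \<otimes> \<beta> [^] \<rho>)"
proof -
  have "a [^] (P * t) = (h \<otimes> \<beta> [^] Q \<otimes> inv h) [^] t"
    using a by (simp add: int_pow_pow PQ[symmetric])
  also have "\<dots> = h \<otimes> \<beta> [^] (Q * t) \<otimes> inv h"
    using h \<beta> by (simp add: int_pow_conj int_pow_pow)
  finally have "h \<otimes> \<beta> [^] (Q * t) = a [^] (P * t) \<otimes> h"
    using h \<beta> by (simp add: m_assoc)
  then show ?thesis using a h \<beta> by (simp add: int_pow_mult m_assoc[symmetric])
qed

text \<open>Writing \<open>q = Q t + \<rho>\<close>, the element \<open>h \<beta>^q\<close> equals \<open>a^{P t} h \<beta>^\<rho>\<close>; so if \<open>a^e h \<beta>^q\<close> lies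
  in the finite set \<open>K\<close>, then \<open>a^{e + P t}\<close> lies in a finite set and \<open>|e + P t|\<close> is bounded.\<close>

lemma (in group) commensurated_coset_exponent_bound:
  fixes P Q :: int
  assumes a: "a \<in> carrier G" "inj (\<lambda>k::int. a [^] k)" and h: "h \<in> carrier G" and \<beta>: "\<beta> \<in> carrier G"
    and PQ: "a [^] P = h \<otimes> \<beta> [^] Q \<otimes> inv h" "P \<noteq> 0" "Q > 0" and K: "finite K"
  obtains M where "\<And>e q::int. a [^] e \<otimes> (h \<otimes> \<beta> [^] q) \<in> K \<Longrightarrow> \<bar>q\<bar> \<le> Q * (\<bar>e\<bar> + M + 1)"
proof -
  define K' where "K' = (\<Union>\<rho>\<in>{0..<Q}. (\<lambda>y. y \<otimes> inv (h \<otimes> \<beta> [^] \<rho>)) ` K)"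
  have "finite K'" unfolding K'_def using K by simp
  then obtain M where M: "\<And>k::int. a [^] k \<in> K' \<Longrightarrow> \<bar>k\<bar> \<le> M"
    using int_pow_exponent_bound[OF a(2)] by blast
  show thesis
  proof (rule that)
    fix e q :: int assume eq: "a [^] e \<otimes> (h \<otimes> \<beta> [^] q) \<in> K"
    define t \<rho> where "t = q div Q" and "\<rho> = q mod Q"
    have \<rho>: "0 \<le> \<rho>" "\<rho> < Q" "q = Q * t + \<rho>" using PQ(3) unfolding t_def \<rho>_def by simp_all
    then have "a [^] e \<otimes> (h \<otimes> \<beta> [^] q) = a [^] (e + P * t) \<otimes> (h \<otimes> \<beta> [^] \<rho>)"
      using commensurated_coset_shift[OF a(1) h \<beta> PQ(1)] a(1) h \<beta> by (simp add: int_pow_mult m_assoc)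
    then have "a [^] e \<otimes> (h \<otimes> \<beta> [^] q) \<otimes> inv (h \<otimes> \<beta> [^] \<rho>) = a [^] (e + P * t)"
      using a(1) h \<beta> by (simp add: inv_solve_right')
    then have "a [^] (e + P * t) \<in> K'" unfolding K'_def using eq \<rho>(1,2) by force
    then have "\<bar>e + P * t\<bar> \<le> M" by (rule M)
    moreover have "1 * \<bar>t\<bar> \<le> \<bar>P\<bar> * \<bar>t\<bar>" using PQ(2) by (intro mult_right_mono) auto
    ultimately have "Q * \<bar>t\<bar> \<le> Q * (\<bar>e\<bar> + M)" using PQ(3) by (simp add: abs_mult)
    moreover have "\<bar>q\<bar> \<le> Q * \<bar>t\<bar> + \<rho>"
      using abs_triangle_ineq[of "Q * t" \<rho>] \<rho>(1,3) PQ(3) by (simp add: abs_mult)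
    moreover have "Q * (\<bar>e\<bar> + M + 1) = Q * (\<bar>e\<bar> + M) + Q" by (simp add: algebra_simps)
    ultimately show "\<bar>q\<bar> \<le> Q * (\<bar>e\<bar> + M + 1)" using \<rho>(2) by linarith
  qed
qed

definition cosets_near_powers ::
  "('a, 'b) monoid_scheme \<Rightarrow> 'a set \<Rightarrow> 'a \<Rightarrow> 'a \<Rightarrow> 'a set \<Rightarrow> nat \<Rightarrow> 'a set" where
  "cosets_near_powers G H \<beta> a K R = {h \<otimes>\<^bsub>G\<^esub> \<beta> [^]\<^bsub>G\<^esub> (q::int) | h q. h \<in> H \<and>
    (\<exists>e::int. \<bar>e\<bar> \<le> int R \<and> a [^]\<^bsub>G\<^esub> e \<otimes>\<^bsub>G\<^esub> (h \<otimes>\<^bsub>G\<^esub> \<beta> [^]\<^bsub>G\<^esub> q) \<in> K)}"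

lemma cosets_near_powers_insert:
  "cosets_near_powers G (insert h H) \<beta> a K R = cosets_near_powers G {h} \<beta> a K R \<union> cosets_near_powers G H \<beta> a K R"
  unfolding cosets_near_powers_def by blast

lemma (in group) commensurated_coset_near_powers:
  fixes P Q :: int
  assumes a: "a \<in> carrier G" "inj (\<lambda>k::int. a [^] k)" and h: "h \<in> carrier G" and \<beta>: "\<beta> \<in> carrier G"
    and PQ: "a [^] P = h \<otimes> \<beta> [^] Q \<otimes> inv h" "P \<noteq> 0" "Q > 0" and K: "finite K"
  obtains M :: nat where "\<And>R. finite (cosets_near_powers G {h} \<beta> a K R)"
    "\<And>R. card (cosets_near_powers G {h} \<beta> a K R) \<le> 3 * nat Q * (R + M + 1)"
proof -
  obtain M0 where M0: "\<And>e q::int. a [^] e \<otimes> (h \<otimes> \<beta> [^] q) \<in> K \<Longrightarrow> \<bar>q\<bar> \<le> Q * (\<bar>e\<bar> + M0 + 1)"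
    using commensurated_coset_exponent_bound[OF a h \<beta> PQ K] by blast
  define B where "B R = Q * (int R + int (nat M0) + 1)" for R :: nat
  have sub: "cosets_near_powers G {h} \<beta> a K R \<subseteq> (\<lambda>q. h \<otimes> \<beta> [^] q) ` {-B R..B R}" for R
    unfolding cosets_near_powers_def
  proof clarify
    fix q e :: int assume e: "\<bar>e\<bar> \<le> int R" "a [^] e \<otimes> (h \<otimes> \<beta> [^] q) \<in> K"
    have "Q * (\<bar>e\<bar> + M0 + 1) \<le> B R" unfolding B_def using e(1) PQ(3) by simp
    then have "q \<in> {-B R..B R}" using M0[OF e(2)] by auto
    then show "h \<otimes> \<beta> [^] q \<in> (\<lambda>q. h \<otimes> \<beta> [^] q) ` {-B R..B R}" by blast
  qed
  show thesis
  proof (rule that[of "nat M0"])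
    show "finite (cosets_near_powers G {h} \<beta> a K R)" for R using sub by (rule finite_subset) simp
    have "1 * 1 \<le> Q * (int R + int (nat M0) + 1)" for R :: nat using PQ(3) by (intro mult_mono) auto
    then have "2 * B R + 1 \<le> int (3 * nat Q * (R + nat M0 + 1))" for R
      unfolding B_def using PQ(3) by (simp add: algebra_simps)
    then have "card {-B R..B R} \<le> 3 * nat Q * (R + nat M0 + 1)" for R by (simp add: nat_le_iff)
    then show "card (cosets_near_powers G {h} \<beta> a K R) \<le> 3 * nat Q * (R + nat M0 + 1)" for R
      using card_mono[OF _ sub] card_image_le[of "{-B R..B R}"] by (meson finite_atLeastAtMost_int finite_imageI le_trans)
  qed
qed

text \<open>Uniformity of \<open>C\<close> in \<open>K\<close> is the point: \<open>K\<close> will grow with the radius of a neighbourhood.\<close>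

lemma (in group) commensurated_cosets_linear_growth:
  assumes a: "a \<in> carrier G" "inj (\<lambda>k::int. a [^] k)" and \<beta>: "\<beta> \<in> carrier G"
    and H: "finite H" "H \<subseteq> carrier G"
    and comm: "\<And>h. h \<in> H \<Longrightarrow> \<exists>(P::int) (Q::int). P \<noteq> 0 \<and> Q > 0 \<and> a [^] P = h \<otimes> \<beta> [^] Q \<otimes> inv h"
  shows "\<exists>C::nat. \<forall>K. finite K \<longrightarrow> (\<exists>M::nat. \<forall>R.
    finite (cosets_near_powers G H \<beta> a K R) \<and> card (cosets_near_powers G H \<beta> a K R) \<le> C * (R + M + 1))"
  using H comm
proof (induction H rule: finite_induct)
  case empty
  show ?case by (auto simp: cosets_near_powers_def)
next
  case (insert h H)
  then obtain C where C: "\<forall>K. finite K \<longrightarrow> (\<exists>M::nat. \<forall>R.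
    finite (cosets_near_powers G H \<beta> a K R) \<and> card (cosets_near_powers G H \<beta> a K R) \<le> C * (R + M + 1))"
    by blast
  obtain P Q :: int where PQ: "a [^] P = h \<otimes> \<beta> [^] Q \<otimes> inv h" "P \<noteq> 0" "Q > 0"
    using insert.prems(2) by blast
  have h: "h \<in> carrier G" using insert.prems(1) by blast
  have "\<exists>M::nat. \<forall>R. finite (cosets_near_powers G (insert h H) \<beta> a K R) \<and>
      card (cosets_near_powers G (insert h H) \<beta> a K R) \<le> (3 * nat Q + C) * (R + M + 1)"
    if K: "finite K" for K
  proof -
    obtain Mh where Mh: "\<And>R. finite (cosets_near_powers G {h} \<beta> a K R)"
      "\<And>R. card (cosets_near_powers G {h} \<beta> a K R) \<le> 3 * nat Q * (R + Mh + 1)"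
      using commensurated_coset_near_powers[OF a h \<beta> PQ K] by blast
    obtain MH where MH: "\<forall>R. finite (cosets_near_powers G H \<beta> a K R) \<and>
        card (cosets_near_powers G H \<beta> a K R) \<le> C * (R + MH + 1)"
      using C K by blast
    have "finite (cosets_near_powers G (insert h H) \<beta> a K R)" for R
      using Mh(1) MH by (simp only: cosets_near_powers_insert[of G h H] finite_Un)
    moreover have "card (cosets_near_powers G (insert h H) \<beta> a K R) \<le> (3 * nat Q + C) * (R + (Mh + MH) + 1)"
      for R
    proof -
      have "card (cosets_near_powers G (insert h H) \<beta> a K R)
          \<le> card (cosets_near_powers G {h} \<beta> a K R) + card (cosets_near_powers G H \<beta> a K R)"
        unfolding cosets_near_powers_insert[of G h H] by (rule card_Un_le)
      also have "\<dots> \<le> 3 * nat Q * (R + Mh + 1) + C * (R + MH + 1)"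
        using Mh(2) MH by (intro add_mono) auto
      also have "\<dots> \<le> (3 * nat Q + C) * (R + (Mh + MH) + 1)" by (simp add: algebra_simps)
      finally show ?thesis .
    qed
    ultimately show ?thesis by blast
  qed
  then show ?case by blast
qed

section \<open>Word metric and Cayley graphs\<close>

fun word_ball :: "('g, 'b) monoid_scheme \<Rightarrow> 'g set \<Rightarrow> nat \<Rightarrow> 'g set" where
  "word_ball G S 0 = {\<one>\<^bsub>G\<^esub>}"
| "word_ball G S (Suc n) = word_ball G S n \<union> {g \<otimes>\<^bsub>G\<^esub> s | g s. g \<in> word_ball G S n \<and> s \<in> S}"

locale cayley_graph = group G for G (structure) +
  fixes S
  assumes generating_set: "finite_symmetric_generating_set G S"
begin

abbreviation CE where "CE \<equiv> cayley_edges G S"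

lemma generators_closed: "S \<subseteq> carrier G"
  using generating_set by (simp add: finite_symmetric_generating_set_def)

lemma word_ball_carrier: "word_ball G S n \<subseteq> carrier G"
  by (induction n) (use generators_closed in auto)

lemma finite_word_ball: "finite (word_ball G S n)"
proof (induction n)
  case (Suc n)
  have "{g \<otimes> s | g s. g \<in> word_ball G S n \<and> s \<in> S} = (\<lambda>(g, s). g \<otimes> s) ` (word_ball G S n \<times> S)"
    by auto
  then show ?case
    using Suc generating_set by (simp add: finite_symmetric_generating_set_def)
qed simp

lemma word_ball_mono: "n \<le> m \<Longrightarrow> word_ball G S n \<subseteq> word_ball G S m"
  by (induction m) (auto simp: le_Suc_eq)

lemma word_ball_mult: "g \<in> word_ball G S n \<Longrightarrow> h \<in> word_ball G S m \<Longrightarrow> g \<otimes> h \<in> word_ball G S (n + m)"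
proof (induction m arbitrary: h)
  case 0
  then have "g \<in> carrier G" using word_ball_carrier by blast
  then show ?case using 0 by simp
next
  case (Suc m)
  show ?case
  proof (cases "h \<in> word_ball G S m")
    case True
    then show ?thesis using Suc.IH[OF Suc.prems(1)] by auto
  next
    case False
    then obtain h' s where hs: "h = h' \<otimes> s" "h' \<in> word_ball G S m" "s \<in> S"
      using Suc.prems(2) by auto
    moreover have "g \<in> carrier G" "h' \<in> carrier G" "s \<in> carrier G"
      using Suc.prems(1) hs word_ball_carrier generators_closed by auto
    ultimately have "g \<otimes> h = (g \<otimes> h') \<otimes> s" by (simp add: m_assoc)
    then show ?thesis using Suc.IH[OF Suc.prems(1) hs(2)] hs(3) by auto
  qed
qed

lemma generator_in_word_ball:
  assumes "s \<in> S"
  shows "s \<in> word_ball G S 1"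
proof -
  have "s = \<one> \<otimes> s" using assms generators_closed by auto
  then show ?thesis using assms by (auto simp del: l_one)
qed

lemma in_some_word_ball: "g \<in> carrier G \<Longrightarrow> \<exists>n. g \<in> word_ball G S n"
proof -
  assume "g \<in> carrier G"
  then have "g \<in> generate G S"
    using generating_set by (simp add: finite_symmetric_generating_set_def)
  then show ?thesis
  proof (induction rule: generate.induct)
    case one
    have "\<one> \<in> word_ball G S 0" by simp
    then show ?case ..
  next
    case (incl h)
    then show ?case using generator_in_word_ball by blast
  next
    case (inv h)
    then have "inv h \<in> S" using generating_set by (simp add: finite_symmetric_generating_set_def)
    then show ?case using generator_in_word_ball by blast
  next
    case (eng h1 h2)
    then obtain n1 n2 where "h1 \<in> word_ball G S n1" "h2 \<in> word_ball G S n2" by blast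
    then show ?case using word_ball_mult by blast
  qed
qed

lemma cayley_walk_word_ball:
  assumes "graph_walk (carrier G) CE p"
  shows "inv (hd p) \<otimes> last p \<in> word_ball G S (length p - 1)"
  using assms
proof (induction p rule: rev_induct)
  case (snoc y q)
  show ?case
  proof (cases "q = []")
    case False
    then have q: "graph_walk (carrier G) CE q" "(last q, y) \<in> CE"
      using snoc.prems graph_walk_append_iff[of q "[y]"] by auto
    then obtain s where s: "s \<in> S" "y = last q \<otimes> s" "last q \<in> carrier G"
      unfolding cayley_edges_def by blast
    have "hd q \<in> carrier G" using q(1) False graph_walk_vertices hd_in_set by blast
    then have "inv (hd q) \<otimes> y = (inv (hd q) \<otimes> last q) \<otimes> s"
      using s generators_closed by (auto simp: m_assoc)
    moreover have "length q - 1 + 1 = length (q @ [y]) - 1" using False by (cases q) auto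
    ultimately show ?thesis
      using word_ball_mult[OF snoc.IH[OF q(1)] generator_in_word_ball[OF s(1)]] False by simp
  qed (use snoc.prems in simp)
qed simp

lemma cayley_dist_le_iff:
  assumes u: "u \<in> carrier G" and v: "v \<in> carrier G"
  shows "graph_dist_le (carrier G) CE u v n \<longleftrightarrow> inv u \<otimes> v \<in> word_ball G S n"
proof
  assume "graph_dist_le (carrier G) CE u v n"
  then show "inv u \<otimes> v \<in> word_ball G S n"
    unfolding graph_dist_le_def using cayley_walk_word_ball word_ball_mono by blast
next
  show "inv u \<otimes> v \<in> word_ball G S n \<Longrightarrow> graph_dist_le (carrier G) CE u v n"
    using v
  proof (induction n arbitrary: v)
    case 0
    then show ?case using u graph_dist_le_refl[OF u] by (simp add: inv_solve_left')
  next
    case (Suc n)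
    show ?case
    proof (cases "inv u \<otimes> v \<in> word_ball G S n")
      case True
      with Suc.IH Suc.prems(2) have "graph_dist_le (carrier G) CE u v n" by blast
      then show ?thesis by (rule graph_dist_le_mono) simp
    next
      case False
      then obtain h s where hs: "inv u \<otimes> v = h \<otimes> s" "h \<in> word_ball G S n" "s \<in> S"
        using Suc.prems(1) by auto
      have h: "h \<in> carrier G" "s \<in> carrier G" using hs word_ball_carrier generators_closed by auto
      then have "inv u \<otimes> (u \<otimes> h) = h" using u by (simp add: m_assoc[symmetric])
      then have "graph_dist_le (carrier G) CE u (u \<otimes> h) n"
        using Suc.IH hs(2) u h by simp
      moreover have "v = (u \<otimes> h) \<otimes> s"
        using hs(1) u h Suc.prems(2) by (simp add: inv_solve_left' m_assoc)
      then have "graph_dist_le (carrier G) CE (u \<otimes> h) v 1"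
        using hs(3) u h Suc.prems(2) by (intro graph_dist_le_edge) (auto simp: cayley_edges_def)
      ultimately show ?thesis using graph_dist_le_trans[of "carrier G" CE u "u \<otimes> h" n v 1] by simp
    qed
  qed
qed

lemma cayley_dist_le_left_mult:
  assumes "g \<in> carrier G" "u \<in> carrier G" "v \<in> carrier G" "graph_dist_le (carrier G) CE u v n"
  shows "graph_dist_le (carrier G) CE (g \<otimes> u) (g \<otimes> v) n"
proof -
  have "inv (g \<otimes> u) \<otimes> (g \<otimes> v) = inv u \<otimes> (inv g \<otimes> (g \<otimes> v))"
    using assms(1-3) by (simp add: inv_mult_group m_assoc)
  also have "inv g \<otimes> (g \<otimes> v) = v"
    using assms(1,3) by (simp add: m_assoc[symmetric])
  finally show ?thesis using assms by (simp add: cayley_dist_le_iff)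
qed

end

lemma (in group) finite_symmetric_generating_set_symmetrize:
  assumes "S \<subseteq> carrier G" "finite S" "generate G S = carrier G"
  shows "finite_symmetric_generating_set G (S \<union> (\<lambda>s. inv s) ` S)"
proof -
  have "generate G S \<subseteq> generate G (S \<union> (\<lambda>s. inv s) ` S)" by (rule mono_generate) blast
  moreover have "generate G (S \<union> (\<lambda>s. inv s) ` S) \<subseteq> carrier G" using assms(1) by (intro generate_incl) auto
  ultimately show ?thesis
    using assms unfolding finite_symmetric_generating_set_def by (auto simp: subset_iff)
qed

section \<open>Actions with infinite cyclic stabilizers on trees\<close>

locale gbs_action =
  fixes G :: "('g, 'b) monoid_scheme" (structure) and V :: "'v set" and E :: "('v \<times> 'v) set"
    and act :: "'g \<Rightarrow> 'v \<Rightarrow> 'v"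
  assumes group: "group G" and GBS: "GBS_action G V E act"
begin

sublocale group G by (rule group)

lemma tree: "is_tree V E"
  using GBS by (simp add: GBS_action_def)

lemma sym_E: "sym E" and edge_vertices: "(u, v) \<in> E \<Longrightarrow> u \<in> V \<and> v \<in> V"
  using tree by (auto simp: is_tree_def)

lemma tree_connected: "u \<in> V \<Longrightarrow> v \<in> V \<Longrightarrow> \<exists>p. graph_walk V E p \<and> hd p = u \<and> last p = v"
  using tree by (simp add: is_tree_def)

lemma tree_no_cycle: "graph_walk V E p \<Longrightarrow> 3 \<le> length p \<Longrightarrow> distinct p \<Longrightarrow> (last p, hd p) \<notin> E"
  using tree by (auto simp: is_tree_def)

lemma tree_action: "tree_action G V E act"
  using GBS by (simp add: GBS_action_def)

lemma act_closed: "g \<in> carrier G \<Longrightarrow> v \<in> V \<Longrightarrow> act g v \<in> V"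
  using tree_action unfolding tree_action_def by (meson bij_betwE)

lemma act_edge_iff:
  "g \<in> carrier G \<Longrightarrow> u \<in> V \<Longrightarrow> v \<in> V \<Longrightarrow> (act g u, act g v) \<in> E \<longleftrightarrow> (u, v) \<in> E"
  using tree_action by (simp add: tree_action_def)

lemma act_one: "v \<in> V \<Longrightarrow> act \<one> v = v"
  using tree_action by (simp add: tree_action_def)

lemma act_mult: "g \<in> carrier G \<Longrightarrow> h \<in> carrier G \<Longrightarrow> v \<in> V \<Longrightarrow> act (g \<otimes> h) v = act g (act h v)"
  using tree_action by (simp add: tree_action_def)

lemma act_inv_act: "g \<in> carrier G \<Longrightarrow> v \<in> V \<Longrightarrow> act (inv g) (act g v) = v"
  by (metis act_mult act_one inv_closed l_inv)

lemma act_act_inv: "g \<in> carrier G \<Longrightarrow> v \<in> V \<Longrightarrow> act g (act (inv g) v) = v"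
  by (metis act_mult act_one inv_closed r_inv)

lemma act_inject: "g \<in> carrier G \<Longrightarrow> u \<in> V \<Longrightarrow> v \<in> V \<Longrightarrow> act g u = act g v \<longleftrightarrow> u = v"
  by (metis act_inv_act)

lemma act_edge: "g \<in> carrier G \<Longrightarrow> (u, v) \<in> E \<Longrightarrow> (act g u, act g v) \<in> E"
  using act_edge_iff edge_vertices by blast

lemma act_walk: "g \<in> carrier G \<Longrightarrow> graph_walk V E p \<Longrightarrow> graph_walk V E (map (act g) p)"
  by (rule graph_walk_map) (auto simp: act_closed act_edge)

lemma act_dist_le_iff:
  assumes "g \<in> carrier G" "x \<in> V" "y \<in> V"
  shows "graph_dist_le V E (act g x) (act g y) d \<longleftrightarrow> graph_dist_le V E x y d"
proof -
  have "graph_dist_le V E (act h x) (act h y) d" if "h \<in> carrier G" "graph_dist_le V E x y d" for h x y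
    using that by (auto intro: graph_dist_le_map[where f = "act h"] simp: act_closed act_edge)
  then show ?thesis using assms by (metis act_inv_act inv_closed)
qed

lemma faithful: "g \<in> carrier G \<Longrightarrow> (\<And>v. v \<in> V \<Longrightarrow> act g v = v) \<Longrightarrow> g = \<one>"
  using GBS by (simp add: GBS_action_def)

lemma cocompact_vertices: "\<exists>FV. finite FV \<and> FV \<subseteq> V \<and> V = {act g v | g v. g \<in> carrier G \<and> v \<in> FV}"
  using GBS by (simp add: GBS_action_def)

lemma cocompact_edges:
  "\<exists>FE. finite FE \<and> FE \<subseteq> E \<and> E = {(act g u, act g v) | g u v. g \<in> carrier G \<and> (u, v) \<in> FE}"
  using GBS by (simp add: GBS_action_def)

lemma vertex_stabilizer_subgroup:
  assumes "v \<in> V"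
  shows "subgroup (vertex_stabilizer G act v) G"
proof (rule subgroupI)
  show "inv g \<in> vertex_stabilizer G act v" if "g \<in> vertex_stabilizer G act v" for g
    using that act_inv_act[OF _ assms, of g] by (simp add: vertex_stabilizer_def)
qed (use assms in \<open>auto simp: vertex_stabilizer_def act_one act_mult\<close>)

lemma act_int_pow_fixed:
  "v \<in> V \<Longrightarrow> g \<in> carrier G \<Longrightarrow> act g v = v \<Longrightarrow> act (g [^] (k::int)) v = v"
  using subgroup_int_pow_closed[OF vertex_stabilizer_subgroup] by (simp add: vertex_stabilizer_def)

lemma act_nat_pow_fixed:
  "v \<in> V \<Longrightarrow> g \<in> carrier G \<Longrightarrow> act g v = v \<Longrightarrow> act (g [^] (k::nat)) v = v"
  using act_int_pow_fixed[of v g "int k"] by (simp add: int_pow_int)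

definition stab_gen :: "'v \<Rightarrow> 'g" where
  "stab_gen v = (SOME a. a \<in> carrier G \<and> vertex_stabilizer G act v = {a [^] (k::int) | k. True})"

lemma stab_gen:
  assumes "v \<in> V"
  shows stab_gen_closed: "stab_gen v \<in> carrier G"
    and vertex_stabilizer_stab_gen: "vertex_stabilizer G act v = {stab_gen v [^] (k::int) | k. True}"
    and stab_gen_pow_inj: "inj (\<lambda>k::int. stab_gen v [^] k)"
proof -
  have cyc: "infinite_cyclic_subgroup G (vertex_stabilizer G act v)"
    using GBS assms by (simp add: GBS_action_def)
  then have "\<exists>a. a \<in> carrier G \<and> vertex_stabilizer G act v = {a [^] (k::int) | k. True}"
    unfolding infinite_cyclic_subgroup_def by blast
  then have "stab_gen v \<in> carrier G \<and> vertex_stabilizer G act v = {stab_gen v [^] (k::int) | k. True}"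
    unfolding stab_gen_def by (rule someI_ex)
  then show "stab_gen v \<in> carrier G" "vertex_stabilizer G act v = {stab_gen v [^] (k::int) | k. True}"
    "inj (\<lambda>k::int. stab_gen v [^] k)"
    using infinite_cyclic_subgroup_int_pow_inj[OF cyc] by auto
qed

lemma fixes_iff_stab_gen_pow:
  "v \<in> V \<Longrightarrow> g \<in> carrier G \<Longrightarrow> act g v = v \<longleftrightarrow> (\<exists>k::int. g = stab_gen v [^] k)"
  using vertex_stabilizer_stab_gen[of v] by (auto simp: vertex_stabilizer_def set_eq_iff)

lemma stabilizer_commute:
  assumes "v \<in> V" "g \<in> carrier G" "h \<in> carrier G" "act g v = v" "act h v = v"
  shows "g \<otimes> h = h \<otimes> g"
proof -
  obtain i j :: int where "g = stab_gen v [^] i" "h = stab_gen v [^] j"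
    using assms fixes_iff_stab_gen_pow by metis
  then show ?thesis using stab_gen_closed[OF assms(1)] by (simp add: int_pow_mult[symmetric] add.commute)
qed

lemma edge_stabilizer_nontrivial:
  assumes "(u, v) \<in> E"
  obtains g where "g \<in> carrier G" "g \<noteq> \<one>" "act g u = u" "act g v = v"
proof -
  have "infinite (edge_stabilizer G act (u, v))"
    using GBS assms by (simp add: GBS_action_def infinite_cyclic_subgroup_def)
  then obtain g where "g \<in> edge_stabilizer G act (u, v) - {\<one>}"
    by (metis Diff_infinite_finite finite.emptyI finite.insertI infinite_imp_nonempty ex_in_conv)
  then show thesis using that by (auto simp: edge_stabilizer_def)
qed

text \<open>Along an edge \<open>w w'\<close>, a nontrivial element fixing \<open>u\<close> and \<open>w\<close> and one fixing \<open>w\<close> and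
  \<open>w'\<close> are both powers of the generator of the stabilizer of \<open>w\<close>, so suitable powers of them
  coincide.\<close>

lemma common_fixed_nontrivial:
  assumes u: "u \<in> V" and v: "v \<in> V"
  obtains z where "z \<in> carrier G" "z \<noteq> \<one>" "act z u = u" "act z v = v"
proof -
  obtain p where p: "graph_walk V E p" "hd p = u" "last p = v" using tree_connected[OF u v] by blast
  have "\<forall>w\<in>set p. \<exists>z\<in>carrier G. z \<noteq> \<one> \<and> act z u = u \<and> act z w = w"
  proof (rule graph_walk_invariant[OF p(1)])
    have "stab_gen u \<noteq> \<one>"
      using stab_gen_pow_inj[OF u] stab_gen_closed[OF u] by (metis int_pow_0 int_pow_1 inj_eq one_neq_zero)
    then show "\<exists>z\<in>carrier G. z \<noteq> \<one> \<and> act z u = u \<and> act z (hd p) = hd p"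
      using p(2) stab_gen_closed[OF u] fixes_iff_stab_gen_pow[OF u] by (metis int_pow_1)
  next
    fix w w' assume w: "w \<in> V" and "\<exists>z\<in>carrier G. z \<noteq> \<one> \<and> act z u = u \<and> act z w = w"
      and e: "(w, w') \<in> E"
    then obtain z where z: "z \<in> carrier G" "z \<noteq> \<one>" "act z u = u" "act z w = w" by blast
    obtain f where f: "f \<in> carrier G" "f \<noteq> \<one>" "act f w = w" "act f w' = w'"
      using edge_stabilizer_nontrivial[OF e] by blast
    obtain i j :: int where ij: "z = stab_gen w [^] i" "f = stab_gen w [^] j"
      using z f w fixes_iff_stab_gen_pow by metis
    have i: "i \<noteq> 0" and j: "j \<noteq> 0" using ij z(2) f(2) by auto
    have zf: "z [^] j = f [^] i" using ij stab_gen_closed[OF w] by (simp add: int_pow_pow mult.commute)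
    have "z [^] j \<noteq> \<one>"
      using stab_gen_pow_inj[OF w] ij(1) stab_gen_closed[OF w] i j
      by (metis int_pow_0 int_pow_pow inj_eq mult_eq_0_iff)
    moreover have "act (z [^] j) u = u" using act_int_pow_fixed[OF u z(1) z(3)] .
    moreover have "act (z [^] j) w' = w'"
      using zf act_int_pow_fixed[OF _ f(1) f(4)] edge_vertices[OF e] by simp
    ultimately show "\<exists>z\<in>carrier G. z \<noteq> \<one> \<and> act z u = u \<and> act z w' = w'"
      using z(1) by blast
  qed
  then show thesis using that p(1,3) last_in_set by (metis graph_walk_Nil)
qed

lemma stab_gen_commensurable:
  assumes x: "x \<in> V" and b: "b \<in> V" and h: "h \<in> carrier G"
  obtains P Q :: int where "P \<noteq> 0" "Q > 0" "stab_gen x [^] P = h \<otimes> stab_gen b [^] Q \<otimes> inv h"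
proof -
  obtain z where z: "z \<in> carrier G" "z \<noteq> \<one>" "act z x = x" "act z (act h b) = act h b"
    using common_fixed_nontrivial[OF x act_closed[OF h b]] by blast
  obtain P :: int where P: "z = stab_gen x [^] P" using fixes_iff_stab_gen_pow[OF x z(1)] z(3) by blast
  have "act (inv h \<otimes> z \<otimes> h) b = b"
    using z h b by (simp add: act_mult act_closed act_inv_act)
  moreover have "inv h \<otimes> z \<otimes> h \<in> carrier G" using z(1) h by simp
  ultimately obtain Q :: int where Q: "inv h \<otimes> z \<otimes> h = stab_gen b [^] Q"
    using fixes_iff_stab_gen_pow[OF b] by blast
  have "(h \<otimes> stab_gen b \<otimes> inv h) [^] Q = h \<otimes> (inv h \<otimes> z \<otimes> h) \<otimes> inv h"
    using h stab_gen_closed[OF b] by (simp add: int_pow_conj Q)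
  also have "\<dots> = z" using conjugation_is_surj[OF h z(1)] .
  finally have z_eq: "(h \<otimes> stab_gen b \<otimes> inv h) [^] Q = z" .
  then have PQ: "stab_gen x [^] P = (h \<otimes> stab_gen b \<otimes> inv h) [^] Q" using P by simp
  have P0: "P \<noteq> 0" and Q0: "Q \<noteq> 0" using P z_eq z(2) by auto
  have conj: "(h \<otimes> stab_gen b \<otimes> inv h) [^] k = h \<otimes> stab_gen b [^] k \<otimes> inv h" for k :: int
    using h stab_gen_closed[OF b] by (rule int_pow_conj)
  show thesis
  proof (cases "Q > 0")
    case True
    then show thesis using that[of P Q] P0 PQ conj by simp
  next
    case False
    have "stab_gen x [^] (- P) = (h \<otimes> stab_gen b \<otimes> inv h) [^] (- Q)"
      using PQ stab_gen_closed[OF x] stab_gen_closed[OF b] h by (simp add: int_pow_neg)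
    then show thesis using that[of "- P" "- Q"] False P0 Q0 conj by simp
  qed
qed

definition stab_orbit :: "'v \<Rightarrow> 'v \<Rightarrow> 'v set" where
  "stab_orbit x y = {act g y | g. g \<in> carrier G \<and> act g x = x}"

lemma stab_orbit_memI: "g \<in> carrier G \<Longrightarrow> act g x = x \<Longrightarrow> act g y \<in> stab_orbit x y"
  unfolding stab_orbit_def by blast

lemma stab_orbit_sym:
  assumes "x \<in> V" "y \<in> V" "y' \<in> stab_orbit x y"
  shows "y \<in> stab_orbit x y'"
proof -
  obtain g where g: "g \<in> carrier G" "act g x = x" "y' = act g y"
    using assms(3) unfolding stab_orbit_def by blast
  then have "act (inv g) x = x" "act (inv g) y' = y" using assms(1,2) act_inv_act by metis+
  then show ?thesis using stab_orbit_memI g(1) by (metis inv_closed)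
qed

text \<open>The stabilizer of \<open>x\<close> acts on the orbit of \<open>y\<close> through a finite cyclic quotient, since
  some nontrivial power of its generator also fixes \<open>y\<close>.\<close>

lemma finite_stab_orbit:
  assumes x: "x \<in> V" and y: "y \<in> V"
  shows "finite (stab_orbit x y)"
proof -
  let ?a = "stab_gen x"
  have a: "?a \<in> carrier G" using stab_gen_closed[OF x] .
  obtain z where z: "z \<in> carrier G" "z \<noteq> \<one>" "act z x = x" "act z y = y"
    using common_fixed_nontrivial[OF x y] by blast
  obtain P :: int where P: "z = ?a [^] P" using fixes_iff_stab_gen_pow[OF x z(1)] z(3) by blast
  have P0: "\<bar>P\<bar> > 0" using P z(2) by auto
  have "stab_orbit x y \<subseteq> (\<lambda>j. act (?a [^] j) y) ` {0..<\<bar>P\<bar>}"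
  proof
    fix w assume "w \<in> stab_orbit x y"
    then obtain k :: int where k: "w = act (?a [^] k) y"
      unfolding stab_orbit_def using fixes_iff_stab_gen_pow[OF x] by blast
    have "?a [^] k = ?a [^] (k mod \<bar>P\<bar>) \<otimes> z [^] (sgn P * (k div \<bar>P\<bar>))"
      using a P by (simp add: int_pow_pow int_pow_mult[symmetric] abs_sgn mult.assoc[symmetric])
    then have "w = act (?a [^] (k mod \<bar>P\<bar>)) y"
      using k a z y by (simp add: act_mult act_int_pow_fixed)
    moreover have "k mod \<bar>P\<bar> \<in> {0..<\<bar>P\<bar>}" using P0 by simp
    ultimately show "w \<in> (\<lambda>j. act (?a [^] j) y) ` {0..<\<bar>P\<bar>}" by blast
  qed
  then show ?thesis using finite_subset by blast
qed

lemma finite_neighbours: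
  assumes x: "x \<in> V"
  shows "finite {w. (x, w) \<in> E}"
proof -
  obtain FE where FE: "finite FE" "E = {(act g u, act g v) | g u v. g \<in> carrier G \<and> (u, v) \<in> FE}"
    "FE \<subseteq> E" using cocompact_edges by blast
  define g0 where "g0 u = (SOME g. g \<in> carrier G \<and> act g u = x)" for u
  have "{w. (x, w) \<in> E} \<subseteq> (\<Union>(u, u')\<in>FE. act (g0 u) ` stab_orbit u u')"
  proof clarify
    fix w assume "(x, w) \<in> E"
    then obtain g u u' where g: "g \<in> carrier G" "(u, u') \<in> FE" "x = act g u" "w = act g u'"
      using FE(2) by blast
    have u: "u \<in> V" "u' \<in> V" using g(2) FE(3) edge_vertices by auto
    have g0: "g0 u \<in> carrier G" "act (g0 u) u = x"
      using someI_ex[of "\<lambda>h. h \<in> carrier G \<and> act h u = x"] g unfolding g0_def by blast+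
    have "act (inv (g0 u) \<otimes> g) u = act (inv (g0 u)) (act (g0 u) u)"
      using g g0 u by (simp add: act_mult)
    then have "act (inv (g0 u) \<otimes> g) u = u" using act_inv_act[OF g0(1) u(1)] by simp
    then have "act (inv (g0 u) \<otimes> g) u' \<in> stab_orbit u u'" using g g0 by (simp add: stab_orbit_memI)
    moreover have "w = act (g0 u) (act (inv (g0 u) \<otimes> g) u')"
      using g g0 u by (simp add: act_mult act_closed act_act_inv)
    ultimately show "w \<in> (\<Union>(u, u')\<in>FE. act (g0 u) ` stab_orbit u u')" using g(2) by blast
  qed
  moreover have "finite (\<Union>(u, u')\<in>FE. act (g0 u) ` stab_orbit u u')"
    using FE(1) by (rule finite_UN_I) (use FE(3) edge_vertices finite_stab_orbit in auto)
  ultimately show ?thesis by (rule finite_subset)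
qed

lemma finite_ball:
  assumes x: "x \<in> V"
  shows "finite {y. graph_dist_le V E x y d}"
proof (induction d)
  case 0
  have "{y. graph_dist_le V E x y 0} \<subseteq> {x}"
    unfolding graph_dist_le_def by (auto simp: le_Suc_eq length_Suc_conv)
  then show ?case using finite_subset by blast
next
  case (Suc d)
  let ?B = "{y. graph_dist_le V E x y d}"
  have "{y. graph_dist_le V E x y (Suc d)} \<subseteq> ?B \<union> (\<Union>z\<in>?B. {w. (z, w) \<in> E})"
  proof
    fix y assume "y \<in> {y. graph_dist_le V E x y (Suc d)}"
    then obtain p where p: "graph_walk V E p" "hd p = x" "last p = y" "length p - 1 \<le> Suc d"
      unfolding graph_dist_le_def by blast
    show "y \<in> ?B \<union> (\<Union>z\<in>?B. {w. (z, w) \<in> E})"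
    proof (cases "length p - 1 \<le> d")
      case True
      then show ?thesis using p unfolding graph_dist_le_def by blast
    next
      case False
      define q where "q = butlast p"
      have "p \<noteq> []" using p(1) by auto
      have "length q = length p - 1" unfolding q_def by simp
      then have "q \<noteq> []" using False by (cases q) auto
      moreover have "p = q @ [y]" using append_butlast_last_id[OF \<open>p \<noteq> []\<close>] p(3) by (simp add: q_def)
      ultimately have pq: "p = q @ [y]" "q \<noteq> []" by blast+
      then have "graph_walk V E q" "(last q, y) \<in> E"
        using p(1) graph_walk_append_iff[of q "[y]"] by auto
      moreover have "graph_dist_le V E x (last q) d"
        unfolding graph_dist_le_def using calculation p pq by (intro exI[of _ q]) auto
      ultimately show ?thesis by blast
    qed
  qed
  moreover have "finite (\<Union>z\<in>?B. {w. (z, w) \<in> E})"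
    using Suc.IH by (rule finite_UN_I) (metis mem_Collect_eq finite_neighbours graph_dist_le_vertices)
  ultimately show ?case using Suc.IH finite_subset by blast
qed

lemma finite_ball_to: "x \<in> V \<Longrightarrow> finite {y. graph_dist_le V E y x d}"
  using finite_ball[of x d] graph_dist_le_sym[OF sym_E] by (auto elim: rev_finite_subset)

lemma finite_cosets_to_finite_set:
  assumes b: "b \<in> V" and B: "finite B"
  obtains H where "finite H" "H \<subseteq> carrier G"
    "\<And>g. g \<in> carrier G \<Longrightarrow> act g b \<in> B \<Longrightarrow> \<exists>h\<in>H. \<exists>q::int. g = h \<otimes> stab_gen b [^] q"
proof
  define rep where "rep y = (SOME h. h \<in> carrier G \<and> act h b = y)" for y
  let ?H = "rep ` {y \<in> B. \<exists>g\<in>carrier G. act g b = y}"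
  show "finite ?H" using B by simp
  have rep: "rep y \<in> carrier G \<and> act (rep y) b = y" if "\<exists>g\<in>carrier G. act g b = y" for y
    using someI_ex[of "\<lambda>h. h \<in> carrier G \<and> act h b = y"] that unfolding rep_def by blast
  then show "?H \<subseteq> carrier G" by blast
  fix g assume g: "g \<in> carrier G" "act g b \<in> B"
  then have r: "rep (act g b) \<in> carrier G" "act (rep (act g b)) b = act g b" using rep by blast+
  then have "act (inv (rep (act g b)) \<otimes> g) b = act (inv (rep (act g b))) (act (rep (act g b)) b)"
    using g b by (simp add: act_mult)
  then have "act (inv (rep (act g b)) \<otimes> g) b = b" using act_inv_act[OF r(1) b] by simp
  then obtain q :: int where "inv (rep (act g b)) \<otimes> g = stab_gen b [^] q"
    using fixes_iff_stab_gen_pow[OF b] r g by blast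
  then have "g = rep (act g b) \<otimes> stab_gen b [^] q"
    using inv_solve_left'[of "stab_gen b [^] q" "rep (act g b)" g] r g stab_gen_closed[OF b] by simp
  then show "\<exists>h\<in>?H. \<exists>q::int. g = h \<otimes> stab_gen b [^] q" using g by blast
qed

text \<open>The \<open>H\<close>-translates of \<open>Y\<close> cover the connected tree, because every edge is a translate
  of an edge with both ends in \<open>Y\<close>.\<close>

lemma subgroup_containing_transitions:
  assumes H: "subgroup H G" and Y: "Y \<subseteq> V" "y0 \<in> Y"
    and transitions: "\<And>g y y'. g \<in> carrier G \<Longrightarrow> y \<in> Y \<Longrightarrow> y' \<in> Y \<Longrightarrow> act g y = y' \<Longrightarrow> g \<in> H"
    and edges: "\<And>w w'. (w, w') \<in> E \<Longrightarrow> \<exists>f\<in>carrier G. \<exists>u\<in>Y. \<exists>u'\<in>Y. w = act f u \<and> w' = act f u'"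
  shows "carrier G \<subseteq> H"
proof -
  have HG: "h \<in> carrier G" if "h \<in> H" for h using subgroup.subset[OF H] that by blast
  have into_H: "g \<in> H" if g: "g \<in> carrier G" "h \<in> H" "y \<in> Y" "y' \<in> Y" "act g y' = act h y" for g h y y'
  proof -
    have "act (inv h \<otimes> g) y' = act (inv h) (act h y)" using g HG Y by (simp add: act_mult subsetD)
    then have "act (inv h \<otimes> g) y' = y" using act_inv_act[OF HG[OF g(2)]] g(3) Y(1) by auto
    then have "inv h \<otimes> g \<in> H" using transitions g HG by simp
    then have "h \<otimes> (inv h \<otimes> g) \<in> H" using subgroup.m_closed[OF H] g(2) by blast
    then show "g \<in> H" using g HG by (simp add: m_assoc[symmetric])
  qed
  have reach: "\<exists>h\<in>H. \<exists>y\<in>Y. v = act h y" if v: "v \<in> V" for v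
  proof -
    obtain p where p: "graph_walk V E p" "hd p = y0" "last p = v"
      using tree_connected v Y by blast
    have "\<forall>w\<in>set p. \<exists>h\<in>H. \<exists>y\<in>Y. w = act h y"
    proof (rule graph_walk_invariant[OF p(1)])
      show "\<exists>h\<in>H. \<exists>y\<in>Y. hd p = act h y"
        using p(2) Y act_one subgroup.one_closed[OF H] by (metis subsetD)
    next
      fix w w' assume "\<exists>h\<in>H. \<exists>y\<in>Y. w = act h y" "(w, w') \<in> E"
      moreover obtain f u u' where f: "f \<in> carrier G" "u \<in> Y" "u' \<in> Y" "w = act f u" "w' = act f u'"
        using edges \<open>(w, w') \<in> E\<close> by blast
      ultimately have "f \<in> H" using into_H by metis
      then show "\<exists>h\<in>H. \<exists>y\<in>Y. w' = act h y" using f by blast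
    qed
    then show ?thesis using p(1,3) last_in_set by (metis graph_walk_Nil)
  qed
  show ?thesis
  proof
    fix g assume g: "g \<in> carrier G"
    obtain h y where "h \<in> H" "y \<in> Y" "act g y0 = act h y" using reach act_closed g Y by blast
    then show "g \<in> H" using into_H g Y(2) by blast
  qed
qed

text \<open>Generators: the stabilizer generators of finitely many vertices \<open>Y\<close>, together with one
  element mapping \<open>y\<close> to \<open>y'\<close> for each pair of \<open>G\<close>-equivalent vertices of \<open>Y\<close>.\<close>

lemma finitely_generated:
  obtains S where "finite_symmetric_generating_set G S"
proof -
  obtain FE where FE: "finite FE" "FE \<subseteq> E" "E = {(act g u, act g v) | g u v. g \<in> carrier G \<and> (u, v) \<in> FE}"
    using cocompact_edges by blast
  obtain y0 where y0: "y0 \<in> V" using tree by (auto simp: is_tree_def)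
  define Y where "Y = insert y0 (fst ` FE \<union> snd ` FE)"
  have Y: "Y \<subseteq> V" "finite Y" "y0 \<in> Y"
    unfolding Y_def using y0 FE(1,2) edge_vertices by force+
  define rep where "rep y y' = (SOME g. g \<in> carrier G \<and> act g y = y')" for y y'
  have rep: "rep y y' \<in> carrier G \<and> act (rep y y') y = y'" if "\<exists>g\<in>carrier G. act g y = y'" for y y'
    using someI_ex[of "\<lambda>g. g \<in> carrier G \<and> act g y = y'"] that unfolding rep_def by blast
  define S where "S = stab_gen ` Y \<union> (\<lambda>(y, y'). rep y y') ` {(y, y') \<in> Y \<times> Y. \<exists>g\<in>carrier G. act g y = y'}"
  have "finite {(y, y') \<in> Y \<times> Y. \<exists>g\<in>carrier G. act g y = y'}"
    using Y(2) by (auto intro: rev_finite_subset[of "Y \<times> Y"])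
  then have S: "S \<subseteq> carrier G" "finite S"
    unfolding S_def using Y rep stab_gen_closed by (auto simp: subset_iff)
  have "carrier G \<subseteq> generate G S"
  proof (rule subgroup_containing_transitions[OF generate_is_subgroup[OF S(1)] Y(1,3)])
    fix g y y' assume g: "g \<in> carrier G" "y \<in> Y" "y' \<in> Y" "act g y = y'"
    then have r: "rep y y' \<in> carrier G" "act (rep y y') y = y'" using rep by blast+
    have yV: "y \<in> V" using g(2) Y(1) by blast
    have "act (inv (rep y y') \<otimes> g) y = act (inv (rep y y')) (act (rep y y') y)"
      using g r yV by (simp add: act_mult)
    then have "act (inv (rep y y') \<otimes> g) y = y" using act_inv_act[OF r(1) yV] by simp
    then obtain k :: int where k: "inv (rep y y') \<otimes> g = stab_gen y [^] k"
      using fixes_iff_stab_gen_pow[OF yV] r(1) g(1) by (meson inv_closed m_closed)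
    have "stab_gen y \<in> generate G S" "rep y y' \<in> generate G S"
      unfolding S_def using g by (auto intro: generate.incl)
    then have "rep y y' \<otimes> (inv (rep y y') \<otimes> g) \<in> generate G S"
      unfolding k by (intro generate.eng subgroup_int_pow_closed[OF generate_is_subgroup[OF S(1)]])
    then show "g \<in> generate G S" using r(1) g(1) by (simp add: m_assoc[symmetric])
  next
    fix w w' assume "(w, w') \<in> E"
    then obtain f u u' where "f \<in> carrier G" "(u, u') \<in> FE" "w = act f u" "w' = act f u'"
      using FE(3) by blast
    then show "\<exists>f\<in>carrier G. \<exists>u\<in>Y. \<exists>u'\<in>Y. w = act f u \<and> w' = act f u'"
      unfolding Y_def by force
  qed
  then have "generate G S = carrier G" using generate_incl[OF S(1)] by blast
  then show thesis using that finite_symmetric_generating_set_symmetrize S by blast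
qed

lemma stab_orbit_self: "x \<in> V \<Longrightarrow> y \<in> V \<Longrightarrow> y \<in> stab_orbit x y"
  using stab_orbit_memI[of \<one> x y] by (simp add: act_one)

lemma stab_orbit_trans:
  assumes x: "x \<in> V" and y: "y \<in> V" and w: "w \<in> stab_orbit x y" and w': "w' \<in> stab_orbit x w"
  shows "w' \<in> stab_orbit x y"
proof -
  obtain g g' where g: "g \<in> carrier G" "act g x = x" "w = act g y"
    and g': "g' \<in> carrier G" "act g' x = x" "w' = act g' w"
    using w w' unfolding stab_orbit_def by blast
  then have "act (g' \<otimes> g) x = x" "w' = act (g' \<otimes> g) y" using x y by (simp_all add: act_mult)
  then show ?thesis using stab_orbit_memI g(1) g'(1) by (metis m_closed)
qed

lemma stab_orbit_eq:
  assumes x: "x \<in> V" and y: "y \<in> V" and w: "w \<in> stab_orbit x y"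
  shows "stab_orbit x w = stab_orbit x y"
proof -
  have "w \<in> V" using w act_closed y unfolding stab_orbit_def by blast
  then show ?thesis using stab_orbit_trans stab_orbit_sym assms by blast
qed

lemma stab_pow_inj:
  assumes x: "x \<in> V" and z: "z \<in> carrier G" "z \<noteq> \<one>" "act z x = x"
  shows "inj (\<lambda>j::int. z [^] j)"
proof (rule injI)
  obtain p :: int where p: "z = stab_gen x [^] p" using fixes_iff_stab_gen_pow[OF x z(1)] z(3) by blast
  then have "p \<noteq> 0" using z(2) by auto
  fix i j :: int assume "z [^] i = z [^] j"
  then have "stab_gen x [^] (p * i) = stab_gen x [^] (p * j)"
    using p stab_gen_closed[OF x] by (simp add: int_pow_pow)
  then have "p * i = p * j" by (rule injD[OF stab_gen_pow_inj[OF x]])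
  then show "i = j" using \<open>p \<noteq> 0\<close> by simp
qed

definition wall :: "'v \<Rightarrow> 'v \<Rightarrow> nat \<Rightarrow> 'g set" where
  "wall b x \<delta> = {g \<in> carrier G. graph_dist_le V E (act g b) x \<delta>}"

lemma wall_commensurated_cosets:
  assumes x: "x \<in> V" and b: "b \<in> V"
  obtains H where "finite H" "H \<subseteq> carrier G"
    "\<And>g. g \<in> wall b x \<delta> \<Longrightarrow> \<exists>h\<in>H. \<exists>q::int. g = h \<otimes> stab_gen b [^] q"
    "\<And>h. h \<in> H \<Longrightarrow> \<exists>(P::int) (Q::int). P \<noteq> 0 \<and> Q > 0 \<and>
      stab_gen x [^] P = h \<otimes> stab_gen b [^] Q \<otimes> inv h"
proof -
  obtain H where H: "finite H" "H \<subseteq> carrier G"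
    "\<And>g. g \<in> carrier G \<Longrightarrow> act g b \<in> {y. graph_dist_le V E y x \<delta>} \<Longrightarrow>
      \<exists>h\<in>H. \<exists>q::int. g = h \<otimes> stab_gen b [^] q"
    using finite_cosets_to_finite_set[OF b finite_ball_to[OF x]] by blast
  show thesis
  proof (rule that[OF H(1,2)])
    show "\<exists>h\<in>H. \<exists>q::int. g = h \<otimes> stab_gen b [^] q" if "g \<in> wall b x \<delta>" for g
      using H(3) that unfolding wall_def by blast
    fix h assume "h \<in> H"
    then have "h \<in> carrier G" using H(2) by blast
    then obtain P Q :: int where "P \<noteq> 0" "Q > 0" "stab_gen x [^] P = h \<otimes> stab_gen b [^] Q \<otimes> inv h"
      by (rule stab_gen_commensurable[OF x b])
    then show "\<exists>(P::int) (Q::int). P \<noteq> 0 \<and> Q > 0 \<and> stab_gen x [^] P = h \<otimes> stab_gen b [^] Q \<otimes> inv h"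
      by blast
  qed
qed

definition wall_grows_linearly :: "'v \<Rightarrow> 'v \<Rightarrow> nat \<Rightarrow> 'g \<Rightarrow> nat \<Rightarrow> bool" where
  "wall_grows_linearly b x \<delta> z C \<longleftrightarrow> (\<forall>K. finite K \<longrightarrow> (\<exists>M::nat. \<forall>L::nat.
    finite {g \<in> wall b x \<delta>. \<exists>j::int. \<bar>j\<bar> \<le> L \<and> z [^] j \<otimes> g \<in> K} \<and>
    card {g \<in> wall b x \<delta>. \<exists>j::int. \<bar>j\<bar> \<le> L \<and> z [^] j \<otimes> g \<in> K} \<le> C * (L + M + 1)))"

lemma wall_linear_growth:
  assumes x: "x \<in> V" and b: "b \<in> V" and z: "z \<in> carrier G" "z \<noteq> \<one>" "act z x = x"
  obtains C where "wall_grows_linearly b x \<delta> z C"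
proof -
  let ?a = "stab_gen x" and ?\<beta> = "stab_gen b"
  obtain p :: int where p: "z = ?a [^] p" using fixes_iff_stab_gen_pow[OF x z(1)] z(3) by blast
  obtain H where H: "finite H" "H \<subseteq> carrier G" "\<And>g. g \<in> wall b x \<delta> \<Longrightarrow> \<exists>h\<in>H. \<exists>q::int. g = h \<otimes> ?\<beta> [^] q"
    "\<And>h. h \<in> H \<Longrightarrow> \<exists>(P::int) (Q::int). P \<noteq> 0 \<and> Q > 0 \<and> ?a [^] P = h \<otimes> ?\<beta> [^] Q \<otimes> inv h"
    using wall_commensurated_cosets[OF x b, where \<delta> = \<delta>] by blast
  then obtain C where C: "\<forall>K. finite K \<longrightarrow> (\<exists>M::nat. \<forall>R. finite (cosets_near_powers G H ?\<beta> ?a K R) \<and>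
      card (cosets_near_powers G H ?\<beta> ?a K R) \<le> C * (R + M + 1))"
    using commensurated_cosets_linear_growth[OF stab_gen_closed[OF x] stab_gen_pow_inj[OF x]
        stab_gen_closed[OF b] H(1,2)] by blast
  have "\<exists>M::nat. \<forall>L::nat.
      finite {g \<in> wall b x \<delta>. \<exists>j::int. \<bar>j\<bar> \<le> L \<and> z [^] j \<otimes> g \<in> K} \<and>
      card {g \<in> wall b x \<delta>. \<exists>j::int. \<bar>j\<bar> \<le> L \<and> z [^] j \<otimes> g \<in> K} \<le> C * (nat \<bar>p\<bar> + 1) * (L + M + 1)"
    if K: "finite K" for K
  proof -
    obtain M where M: "\<forall>R. finite (cosets_near_powers G H ?\<beta> ?a K R) \<and>
        card (cosets_near_powers G H ?\<beta> ?a K R) \<le> C * (R + M + 1)"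
      using C K by blast
    have sub: "{g \<in> wall b x \<delta>. \<exists>j::int. \<bar>j\<bar> \<le> L \<and> z [^] j \<otimes> g \<in> K}
        \<subseteq> cosets_near_powers G H ?\<beta> ?a K (nat \<bar>p\<bar> * L)" for L
    proof clarify
      fix g and j :: int assume g: "g \<in> wall b x \<delta>" "\<bar>j\<bar> \<le> int L" "z [^] j \<otimes> g \<in> K"
      obtain h q where hq: "h \<in> H" "g = h \<otimes> ?\<beta> [^] (q::int)" using H(3) g(1) by blast
      have "z [^] j = ?a [^] (p * j)" using p stab_gen_closed[OF x] by (simp add: int_pow_pow)
      then have "?a [^] (p * j) \<otimes> (h \<otimes> ?\<beta> [^] q) \<in> K" using g(3) hq(2) by simp
      moreover have "\<bar>p * j\<bar> \<le> int (nat \<bar>p\<bar> * L)" using g(2) by (simp add: abs_mult mult_left_mono)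
      ultimately show "g \<in> cosets_near_powers G H ?\<beta> ?a K (nat \<bar>p\<bar> * L)"
        unfolding cosets_near_powers_def using hq by blast
    qed
    have "C * (nat \<bar>p\<bar> * L + M + 1) \<le> C * (nat \<bar>p\<bar> + 1) * (L + M + 1)" for L
      by (simp add: algebra_simps)
    then show ?thesis
      using M sub by (meson card_mono finite_subset le_trans)
  qed
  then show thesis using that unfolding wall_grows_linearly_def by blast
qed

end

section \<open>Branches\<close>

context gbs_action
begin

definition branch :: "'v \<Rightarrow> 'v \<Rightarrow> 'v set" where
  "branch x n = {w. \<exists>p. graph_walk V E p \<and> hd p = n \<and> last p = w \<and> x \<notin> set p}"

lemma branch_subset: "branch x n \<subseteq> V"
  unfolding branch_def using graph_walk_vertices last_in_set by (fastforce simp: graph_walk_def)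

lemma walk_between_neighbours:
  assumes "(x, n1) \<in> E" "(x, n2) \<in> E" "n1 \<noteq> n2" "graph_walk V E p" "hd p = n1" "last p = n2"
  shows "x \<in> set p"
proof (rule ccontr)
  assume x: "x \<notin> set p"
  obtain q where q: "graph_walk V E q" "distinct q" "hd q = n1" "last q = n2" "set q \<subseteq> set p"
    using graph_walk_distinct[OF assms(4)] assms(5,6) by metis
  then obtain n1' q' where q': "q = n1' # q'" "q' \<noteq> []" using assms(3) by (cases q; cases "tl q") auto
  have "graph_walk V E (x # q)"
    using q(1,3) q' assms(1) edge_vertices by (simp add: graph_walk_Cons_iff)
  moreover have "3 \<le> length (x # q)" using q' by (cases q') auto
  moreover have "distinct (x # q)" using q(2,5) x by auto
  moreover have "(last (x # q), hd (x # q)) \<in> E"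
    using q(4) q' assms(2) sym_E by (auto dest: symD)
  ultimately show False using tree_no_cycle by blast
qed

lemma walk_between_branches:
  assumes "(x, n1) \<in> E" "(x, n2) \<in> E" "n1 \<noteq> n2" "w1 \<in> branch x n1" "w2 \<in> branch x n2"
    and q: "graph_walk V E q" "hd q = w1" "last q = w2"
  shows "x \<in> set q"
proof (rule ccontr)
  assume xq: "x \<notin> set q"
  obtain p1 where p1: "graph_walk V E p1" "hd p1 = n1" "last p1 = w1" "x \<notin> set p1"
    using assms(4) unfolding branch_def by blast
  obtain p2 where p2: "graph_walk V E p2" "hd p2 = n2" "last p2 = w2" "x \<notin> set p2"
    using assms(5) unfolding branch_def by blast
  have r2: "graph_walk V E (rev p2)" "hd (rev p2) = w2" "last (rev p2) = n2"
    using p2 graph_walk_rev[OF sym_E] by (auto simp: hd_rev last_rev)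
  have "last p1 = hd q" using p1(3) q(2) by simp
  note j1 = graph_walk_join[OF p1(1) q(1) this]
  have "last (p1 @ tl q) = hd (rev p2)" using j1(3) q(3) r2(2) by simp
  note j2 = graph_walk_join[OF j1(1) r2(1) this]
  have "x \<in> set ((p1 @ tl q) @ tl (rev p2))"
    using walk_between_neighbours[OF assms(1-3) j2(1)] j1 j2 p1 q r2 by simp
  moreover have "set ((p1 @ tl q) @ tl (rev p2)) \<subseteq> set p1 \<union> set q \<union> set p2"
    using j1(4) j2(4) by auto
  ultimately show False using xq p1(4) p2(4) by blast
qed

lemma act_branch:
  assumes g: "g \<in> carrier G" and x: "x \<in> V" and w: "w \<in> branch x n"
  shows "act g w \<in> branch (act g x) (act g n)"
proof -
  obtain p where p: "graph_walk V E p" "hd p = n" "last p = w" "x \<notin> set p"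
    using w unfolding branch_def by blast
  have "act g x \<notin> set (map (act g) p)"
    using p(1,4) act_inject[OF g] x graph_walk_vertices by fastforce
  moreover have "p \<noteq> []" using p(1) by auto
  ultimately show ?thesis
    unfolding branch_def using act_walk[OF g p(1)] p(2,3)
    by (intro CollectI exI[of _ "map (act g) p"]) (auto simp: hd_map last_map)
qed

definition stab_moves :: "'v \<Rightarrow> 'v \<Rightarrow> bool" where
  "stab_moves x n \<longleftrightarrow> (\<exists>c\<in>carrier G. act c x = x \<and> act c n \<noteq> n)"

definition moved_branches :: "'v \<Rightarrow> 'v set" where
  "moved_branches x = \<Union>{branch x n | n. (x, n) \<in> E \<and> stab_moves x n}"

lemma moved_branches_act_subset:
  assumes g: "g \<in> carrier G" and x: "x \<in> V"
  shows "moved_branches (act g x) \<subseteq> act g ` moved_branches x"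
proof
  fix w assume "w \<in> moved_branches (act g x)"
  then obtain n c where n: "w \<in> branch (act g x) n" "(act g x, n) \<in> E"
    and c: "c \<in> carrier G" "act c (act g x) = act g x" "act c n \<noteq> n"
    unfolding moved_branches_def stab_moves_def by blast
  have nV: "n \<in> V" using n(2) edge_vertices by blast
  define n' where "n' = act (inv g) n"
  have n': "n' \<in> V" "act g n' = n" "(x, n') \<in> E"
    unfolding n'_def using act_closed act_act_inv act_edge[OF inv_closed[OF g] n(2)] act_inv_act g x nV
    by auto
  let ?c = "inv g \<otimes> c \<otimes> g"
  have "act ?c x = x" "act ?c n' = act (inv g) (act c n)"
    using c g x n' nV by (simp_all add: act_mult act_closed act_inv_act)
  moreover have "act (inv g) (act c n) \<noteq> n'"
    unfolding n'_def using act_inject[OF inv_closed[OF g]] act_closed c(1,3) nV by simp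
  ultimately have "stab_moves x n'" unfolding stab_moves_def using c(1) g by force
  moreover have "act (inv g) w \<in> branch x n'"
    using act_branch[OF inv_closed[OF g] act_closed[OF g x] n(1)] g x unfolding n'_def
    by (simp add: act_inv_act)
  ultimately have "act (inv g) w \<in> moved_branches x"
    unfolding moved_branches_def using n'(3) by blast
  moreover have "w \<in> V" using branch_subset n(1) by blast
  then have "w = act g (act (inv g) w)" using act_act_inv[OF g] by simp
  ultimately show "w \<in> act g ` moved_branches x" by blast
qed

lemma moved_branches_act:
  assumes g: "g \<in> carrier G" and x: "x \<in> V"
  shows "act g ` moved_branches x = moved_branches (act g x)"
proof
  have "moved_branches x \<subseteq> act (inv g) ` moved_branches (act g x)"
    using moved_branches_act_subset[OF inv_closed[OF g] act_closed[OF g x]] g x by (simp add: act_inv_act)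
  moreover have "moved_branches (act g x) \<subseteq> V"
    unfolding moved_branches_def using branch_subset by blast
  ultimately show "act g ` moved_branches x \<subseteq> moved_branches (act g x)"
    using g by (auto simp: act_act_inv subset_iff)
qed (rule moved_branches_act_subset[OF g x])

text \<open>Along the walk, \<open>a\<close> keeps fixing the next vertex as long as no element of the stabilizer of
  the current vertex moves it.\<close>

lemma fixed_or_in_moved_branch:
  assumes a: "a \<in> carrier G" and q: "graph_walk V E q" "distinct q" "act a (hd q) = hd q"
  shows "act a (last q) = last q \<or> (\<exists>x\<in>V. act a x = x \<and> last q \<in> moved_branches x)"
  using q
proof (induction q)
  case (Cons y q)
  show ?case
  proof (cases "q = []")
    case False
    then have q: "graph_walk V E q" "(y, hd q) \<in> E" "y \<in> V" "y \<notin> set q" "distinct q"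
      using Cons.prems by (auto simp: graph_walk_Cons_iff)
    show ?thesis
    proof (cases "stab_moves y (hd q)")
      case True
      have "last q \<in> branch y (hd q)" unfolding branch_def using q(1,4) by blast
      then show ?thesis using True Cons.prems(3) q(2,3) False unfolding moved_branches_def by auto
    next
      case False
      then have "act a (hd q) = hd q" using a Cons.prems(3) unfolding stab_moves_def by auto
      then show ?thesis using Cons.IH q(1,5) \<open>q \<noteq> []\<close> by simp
    qed
  qed (use Cons.prems in simp)
qed simp

lemma act_pow_return:
  assumes a: "a \<in> carrier G" and v: "v \<in> V" and A: "finite A" "card A \<le> B"
    and orbit: "\<And>k::nat. act (a [^] k) v \<in> A"
  obtains p where "0 < p" "p \<le> B" "act (a [^] p) v = v"
proof -
  let ?f = "\<lambda>k::nat. act (a [^] k) v"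
  have "card (?f ` {0..B}) \<le> card A" using orbit A(1) by (intro card_mono) auto
  then have "\<not> inj_on ?f {0..B}" using A(2) card_image by fastforce
  then obtain k1 k2 where k: "k1 < k2" "k2 \<le> B" "?f k1 = ?f k2"
    unfolding inj_on_def by (metis atLeastAtMost_iff linorder_neqE_nat)
  have "a [^] k2 = a [^] k1 \<otimes> a [^] (k2 - k1)" using a k(1) by (simp add: nat_pow_mult)
  then have "act (a [^] k1) (act (a [^] (k2 - k1)) v) = act (a [^] k1) v"
    using k(3) a v by (simp add: act_mult)
  then have "act (a [^] (k2 - k1)) v = v" using act_inject a v act_closed by simp
  then show thesis using that[of "k2 - k1"] k by simp
qed

lemma moved_branches_bounded:
  assumes fin: "\<And>x n. (x, n) \<in> E \<Longrightarrow> stab_moves x n \<Longrightarrow> finite (branch x n)"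
  shows "\<exists>B. \<forall>x\<in>V. finite (moved_branches x) \<and> card (moved_branches x) \<le> B"
proof -
  have finite: "finite (moved_branches x)" if x: "x \<in> V" for x
  proof -
    have "{branch x n | n. (x, n) \<in> E \<and> stab_moves x n} \<subseteq> branch x ` {n. (x, n) \<in> E}" by blast
    then show ?thesis
      unfolding moved_branches_def using finite_neighbours[OF x] fin by (auto intro: finite_subset)
  qed
  obtain FV where FV: "finite FV" "FV \<subseteq> V" "V = {act g v | g v. g \<in> carrier G \<and> v \<in> FV}"
    using cocompact_vertices by blast
  show ?thesis
  proof (intro exI[of _ "\<Sum>y\<in>FV. card (moved_branches y)"] ballI conjI)
    fix x assume x: "x \<in> V"
    show "finite (moved_branches x)" using finite[OF x] .
    obtain g y where gy: "g \<in> carrier G" "y \<in> FV" "x = act g y" using x FV(3) by blast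
    have y: "y \<in> V" using gy(2) FV(2) by blast
    have "card (moved_branches x) = card (act g ` moved_branches y)"
      using moved_branches_act[OF gy(1) y] gy(3) by simp
    also have "\<dots> \<le> card (moved_branches y)" using card_image_le[OF finite[OF y]] .
    also have "\<dots> \<le> (\<Sum>y\<in>FV. card (moved_branches y))"
      using FV(1) gy(2) by (intro member_le_sum) auto
    finally show "card (moved_branches x) \<le> (\<Sum>y\<in>FV. card (moved_branches y))" .
  qed
qed

lemma bounded_period:
  assumes B: "\<And>x. x \<in> V \<Longrightarrow> finite (moved_branches x) \<and> card (moved_branches x) \<le> B"
    and a: "a \<in> carrier G" and x0: "x0 \<in> V" "act a x0 = x0" and v: "v \<in> V"
  obtains p where "0 < p" "p \<le> B + 1" "act (a [^] p) v = v"
proof -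
  obtain q where q: "graph_walk V E q" "distinct q" "hd q = x0" "last q = v"
    using tree_connected[OF x0(1) v] graph_walk_distinct by metis
  consider "act a v = v" | x where "x \<in> V" "act a x = x" "v \<in> moved_branches x"
    using fixed_or_in_moved_branch[OF a q(1,2)] q(3,4) x0(2) by auto
  then show thesis
  proof cases
    case 1
    then show thesis using that[of 1] a by simp
  next
    case 2
    have "act (a [^] k) v \<in> moved_branches x" for k :: nat
      using moved_branches_act[of "a [^] k" x] 2 a act_nat_pow_fixed by auto
    then obtain p where "0 < p" "p \<le> B" "act (a [^] p) v = v"
      using act_pow_return[OF a v] B[OF 2(1)] by metis
    then show thesis using that by simp
  qed
qed

text \<open>If all moved branches were finite, they would have bounded size by cocompactness, so a
  generator of a vertex stabilizer would move every vertex with bounded period; a fixed power of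
  it would then act trivially, contradicting faithfulness and infinite order.\<close>

lemma infinite_moved_branch:
  obtains x n where "(x, n) \<in> E" "stab_moves x n" "infinite (branch x n)"
proof (rule ccontr)
  note found = that
  assume "\<not> thesis"
  then have "finite (branch x n)" if "(x, n) \<in> E" "stab_moves x n" for x n
    using found[of x n] that by blast
  then obtain B where B: "\<And>x. x \<in> V \<Longrightarrow> finite (moved_branches x) \<and> card (moved_branches x) \<le> B"
    using moved_branches_bounded by blast
  obtain x0 where x0: "x0 \<in> V" using tree by (auto simp: is_tree_def)
  let ?a = "stab_gen x0"
  have a: "?a \<in> carrier G" "act ?a x0 = x0"
    using stab_gen_closed[OF x0] fixes_iff_stab_gen_pow[OF x0] by (metis int_pow_1)+
  define N :: nat where "N = fact (B + 1)"
  have "act (?a [^] N) v = v" if v: "v \<in> V" for v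
  proof -
    obtain p where p: "0 < p" "p \<le> B + 1" "act (?a [^] p) v = v"
      using bounded_period[OF B a(1) x0 a(2) v] by blast
    then obtain t where "N = p * t" unfolding N_def using dvd_fact[of p "B + 1"] by (auto elim: dvdE)
    then have "?a [^] N = (?a [^] p) [^] t" using a(1) by (simp add: nat_pow_pow)
    then show ?thesis using act_nat_pow_fixed[OF v _ p(3)] a(1) by simp
  qed
  then have "?a [^] (int N) = ?a [^] (0::int)"
    using faithful a(1) by (simp add: int_pow_int)
  then have "int N = 0" by (rule injD[OF stab_gen_pow_inj[OF x0]])
  moreover have "N > 0" unfolding N_def by (rule fact_gt_zero)
  ultimately show False by simp
qed

lemma branch_meets_orbit_infinitely:
  obtains x n b where "(x, n) \<in> E" "stab_moves x n" "b \<in> V"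
    "infinite (branch x n \<inter> {act g b | g. g \<in> carrier G})"
proof -
  obtain x n where xn: "(x, n) \<in> E" "stab_moves x n" "infinite (branch x n)"
    using infinite_moved_branch by blast
  obtain FV where FV: "finite FV" "FV \<subseteq> V" "V = {act g v | g v. g \<in> carrier G \<and> v \<in> FV}"
    using cocompact_vertices by blast
  define meet where "meet b = branch x n \<inter> {act g b | g. g \<in> carrier G}" for b
  have "branch x n \<subseteq> (\<Union>b\<in>FV. meet b)"
  proof
    fix w assume w: "w \<in> branch x n"
    then have "w \<in> V" using branch_subset by blast
    then obtain g b where "g \<in> carrier G" "b \<in> FV" "w = act g b" using FV(3) by blast
    then show "w \<in> (\<Union>b\<in>FV. meet b)" unfolding meet_def using w by blast
  qed
  moreover have "finite (\<Union>b\<in>FV. meet b)" if "\<forall>b\<in>FV. finite (meet b)"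
    using FV(1) that by simp
  ultimately obtain b where "b \<in> FV" "infinite (meet b)" using xn(3) finite_subset by blast
  then have "b \<in> FV" "infinite (branch x n \<inter> {act g b | g. g \<in> carrier G})"
    unfolding meet_def by blast+
  then show thesis using that xn FV(2) by blast
qed

lemma far_points_in_distinct_stab_orbits:
  fixes M :: nat
  assumes x: "x \<in> V" and inf: "infinite (branch x n \<inter> {act g b | g. g \<in> carrier G})"
  obtains y where
    "\<And>i. i < M \<Longrightarrow> y i \<in> branch x n \<and> (\<exists>g\<in>carrier G. act g b = y i) \<and> \<not> graph_dist_le V E (y i) x \<delta>"
    "\<And>i i'. i < M \<Longrightarrow> i' < M \<Longrightarrow> i \<noteq> i' \<Longrightarrow> y i' \<notin> stab_orbit x (y i)"
proof -
  define Y where "Y = branch x n \<inter> {act g b | g. g \<in> carrier G} - {y. graph_dist_le V E y x \<delta>}"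
  have "infinite Y" unfolding Y_def using finite_ball_to[OF x] inf by (rule Diff_infinite_finite)
  moreover have "Y \<subseteq> V" unfolding Y_def using branch_subset by blast
  ultimately obtain y where y: "\<forall>i<M. y i \<in> Y" "\<forall>i<M. \<forall>i'<M. i \<noteq> i' \<longrightarrow> y i' \<notin> stab_orbit x (y i)"
    using infinite_pairwise_unrelated_choice[of Y "stab_orbit x" M] finite_stab_orbit[OF x] stab_orbit_sym[OF x]
    by blast
  have "y i \<in> branch x n \<and> (\<exists>g\<in>carrier G. act g b = y i) \<and> \<not> graph_dist_le V E (y i) x \<delta>" if "i < M" for i
    using y(1) that by (fastforce simp: Y_def)
  moreover have "y i' \<notin> stab_orbit x (y i)" if "i < M" "i' < M" "i \<noteq> i'" for i i'
    using y(2) that by blast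
  ultimately show thesis by (rule that)
qed

lemma spread_orbit_points:
  fixes N :: nat
  assumes x: "x \<in> V" and c: "c \<in> carrier G" "act c x = x" and b: "b \<in> V"
    and inf: "infinite (branch x n \<inter> {act g b | g. g \<in> carrier G})"
  obtains f where
    "\<And>i. i < 2 * N \<Longrightarrow> f i \<in> carrier G \<and> \<not> graph_dist_le V E (act (f i) b) x \<delta> \<and>
      act (f i) b \<in> branch x (if i < N then n else act c n)"
    "\<And>i i'. i < 2 * N \<Longrightarrow> i' < 2 * N \<Longrightarrow> i \<noteq> i' \<Longrightarrow> act (f i') b \<notin> stab_orbit x (act (f i) b)"
proof -
  obtain y where y:
    "\<And>i. i < 2 * N \<Longrightarrow> y i \<in> branch x n \<and> (\<exists>g\<in>carrier G. act g b = y i) \<and> \<not> graph_dist_le V E (y i) x \<delta>"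
    "\<And>i i'. i < 2 * N \<Longrightarrow> i' < 2 * N \<Longrightarrow> i \<noteq> i' \<Longrightarrow> y i' \<notin> stab_orbit x (y i)"
    using far_points_in_distinct_stab_orbits[OF x inf, where M = "2 * N" and \<delta> = \<delta>] by blast
  then have "\<forall>i\<in>{..<2 * N}. \<exists>g. g \<in> carrier G \<and> act g b = y i" by blast
  from bchoice[OF this] obtain h where h: "\<forall>i\<in>{..<2 * N}. h i \<in> carrier G \<and> act (h i) b = y i" ..
  have yV: "y i \<in> V" if "i < 2 * N" for i using y(1)[OF that] branch_subset by blast
  define f where "f i = (if i < N then h i else c \<otimes> h i)" for i
  have f: "f i \<in> carrier G" "act (f i) b = (if i < N then y i else act c (y i))" if "i < 2 * N" for i
    using h that c b by (auto simp: f_def act_mult)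
  have orbit_f: "stab_orbit x (act (f i) b) = stab_orbit x (y i)" if "i < 2 * N" for i
  proof (cases "i < N")
    case False
    then have "act (f i) b \<in> stab_orbit x (y i)" using f(2)[OF that] stab_orbit_memI[OF c] by simp
    then show ?thesis by (rule stab_orbit_eq[OF x yV[OF that]])
  qed (use f(2)[OF that] in simp)
  show thesis
  proof (rule that)
    fix i assume i: "i < 2 * N"
    have "act c (y i) \<in> branch x (act c n)" using act_branch[OF c(1) x] y(1)[OF i] c(2) by simp
    moreover have "\<not> graph_dist_le V E (act c (y i)) x \<delta>"
      using act_dist_le_iff[OF c(1) yV[OF i] x] c(2) y(1)[OF i] by simp
    ultimately show "f i \<in> carrier G \<and> \<not> graph_dist_le V E (act (f i) b) x \<delta> \<and>
        act (f i) b \<in> branch x (if i < N then n else act c n)"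
      using f[OF i] y(1)[OF i] by auto
  next
    fix i i' assume i: "i < 2 * N" "i' < 2 * N" "i \<noteq> i'"
    show "act (f i') b \<notin> stab_orbit x (act (f i) b)"
    proof
      assume "act (f i') b \<in> stab_orbit x (act (f i) b)"
      then have "stab_orbit x (y i') = stab_orbit x (y i)"
        using orbit_f i stab_orbit_eq[OF x] act_closed f b by (metis (no_types, lifting))
      then show False using y(2) i stab_orbit_self[OF x yV] by blast
    qed
  qed
qed

lemma stab_translates_inj:
  assumes x: "x \<in> V" and b: "b \<in> V" and z: "z \<in> carrier G" "z \<noteq> \<one>" "act z x = x"
    and f: "\<And>i. i \<in> I \<Longrightarrow> f i \<in> carrier G"
    and sep: "\<And>i i'. i \<in> I \<Longrightarrow> i' \<in> I \<Longrightarrow> i \<noteq> i' \<Longrightarrow> act (f i') b \<notin> stab_orbit x (act (f i) b)"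
  shows "inj_on (\<lambda>(j::int, i). z [^] j \<otimes> f i) (UNIV \<times> I)"
proof (rule inj_onI, clarify)
  fix j i j' i' assume i: "i \<in> I" "i' \<in> I" and eq: "z [^] (j::int) \<otimes> f i = z [^] (j'::int) \<otimes> f i'"
  let ?g = "inv (z [^] j') \<otimes> z [^] j"
  have g: "?g \<in> carrier G" "act ?g x = x"
    using z x act_int_pow_fixed[OF x z(1) z(3)] by (simp_all add: act_mult int_pow_neg[symmetric])
  have "f i' = ?g \<otimes> f i"
    using eq z f i by (simp add: inv_solve_left m_assoc)
  then have "act (f i') b = act ?g (act (f i) b)" using g(1) f i b by (simp add: act_mult)
  then have "i = i'" using sep i stab_orbit_memI[OF g] by metis
  then have "z [^] j = z [^] j'" using eq z f i by simp
  then show "j = j' \<and> i = i'" using injD[OF stab_pow_inj[OF x z]] \<open>i = i'\<close> by blast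
qed

lemma separating_configuration:
  obtains x n b c z where "(x, n) \<in> E" "c \<in> carrier G" "act c x = x" "act c n \<noteq> n" "b \<in> V"
    "infinite (branch x n \<inter> {act g b | g. g \<in> carrier G})"
    "z \<in> carrier G" "z \<noteq> \<one>" "act z x = x" "act z n = n"
proof -
  obtain x n b where xnb: "(x, n) \<in> E" "stab_moves x n" "b \<in> V"
    "infinite (branch x n \<inter> {act g b | g. g \<in> carrier G})"
    by (rule branch_meets_orbit_infinitely)
  moreover obtain c where "c \<in> carrier G" "act c x = x" "act c n \<noteq> n"
    using xnb(2) unfolding stab_moves_def by blast
  moreover obtain z where "z \<in> carrier G" "z \<noteq> \<one>" "act z x = x" "act z n = n"
    using common_fixed_nontrivial edge_vertices[OF xnb(1)] by metis
  ultimately show thesis using that by blast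
qed

end

section \<open>The wall separating translates\<close>

locale gbs_cayley = gbs_action G V E act + cayley_graph G S
  for G :: "('g, 'b) monoid_scheme" (structure) and V E act S
begin

text \<open>Each Cayley edge \<open>g \<mapsto> g s\<close> becomes a tree walk of length at most \<open>\<delta>\<close> from \<open>g b\<close> to
  \<open>g s b\<close>, which avoids \<open>x\<close> when \<open>g b\<close> is not within \<open>\<delta>\<close> of \<open>x\<close>.\<close>

lemma cayley_walk_shadow:
  assumes b: "b \<in> V" and \<delta>: "\<And>s. s \<in> S \<Longrightarrow> graph_dist_le V E b (act s b) \<delta>"
    and p: "graph_walk (carrier G) CE p" and far: "\<And>g. g \<in> set p \<Longrightarrow> \<not> graph_dist_le V E (act g b) x \<delta>"
  shows "\<exists>q. graph_walk V E q \<and> hd q = act (hd p) b \<and> last q = act (last p) b \<and> x \<notin> set q"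
  using p far
proof (induction p)
  case (Cons g p)
  have g: "g \<in> carrier G" using Cons.prems(1) graph_walk_vertices by fastforce
  have gb: "act g b \<in> V" using act_closed[OF g b] .
  have x: "x \<noteq> act g b" using Cons.prems(2)[of g] graph_dist_le_refl[OF gb] by auto
  show ?case
  proof (cases "p = []")
    case True
    then show ?thesis using gb x by (intro exI[of _ "[act g b]"]) auto
  next
    case False
    then have p: "graph_walk (carrier G) CE p" "(g, hd p) \<in> CE"
      using Cons.prems(1) by (auto simp: graph_walk_Cons_iff)
    obtain q where q: "graph_walk V E q" "hd q = act (hd p) b" "last q = act (last p) b" "x \<notin> set q"
      using Cons.IH[OF p(1)] Cons.prems(2) by auto
    obtain s where s: "s \<in> S" "hd p = g \<otimes> s" using p(2) unfolding cayley_edges_def by blast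
    obtain r where r: "graph_walk V E r" "hd r = b" "last r = act s b" "length r - 1 \<le> \<delta>"
      using \<delta>[OF s(1)] unfolding graph_dist_le_def by blast
    let ?r = "map (act g) r"
    have "r \<noteq> []" using r(1) by auto
    then have r': "graph_walk V E ?r" "hd ?r = act g b" "last ?r = act (hd p) b" "length ?r - 1 \<le> \<delta>"
      using act_walk[OF g r(1)] r s g generators_closed b by (auto simp: hd_map last_map act_mult)
    have "x \<notin> set ?r"
      using graph_dist_le_walk_member[OF r'(1) _ r'(4)] r'(2) Cons.prems(2)[of g] by auto
    then show ?thesis
      using graph_walk_join[of V E ?r q] r' q False by (intro exI[of _ "?r @ tl q"]) auto
  qed
qed simp

lemma cayley_walk_meets_wall:
  assumes b: "b \<in> V" and \<delta>: "\<And>s. s \<in> S \<Longrightarrow> graph_dist_le V E b (act s b) \<delta>"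
    and nbrs: "(x, n1) \<in> E" "(x, n2) \<in> E" "n1 \<noteq> n2"
    and p: "graph_walk (carrier G) CE p" "act (hd p) b \<in> branch x n1" "act (last p) b \<in> branch x n2"
  shows "\<exists>g\<in>set p. graph_dist_le V E (act g b) x \<delta>"
  using cayley_walk_shadow[OF b \<delta> p(1)] walk_between_branches[OF nbrs p(2,3)] by blast

end

locale slab_configuration = gbs_cayley G V E act S
  for G :: "('g, 'b) monoid_scheme" (structure) and V :: "'v set" and E act S +
  fixes x n b :: 'v and c :: 'g and \<delta> :: nat and z :: 'g and f :: "nat \<Rightarrow> 'g" and N :: nat
  assumes edge: "(x, n) \<in> E"
    and c: "c \<in> carrier G" "act c x = x" "act c n \<noteq> n"
    and b: "b \<in> V"
    and z: "z \<in> carrier G" "z \<noteq> \<one>" "act z x = x" "act z n = n"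
    and \<delta>: "\<And>s. s \<in> S \<Longrightarrow> graph_dist_le V E b (act s b) \<delta>"
    and points: "\<And>i. i < 2 * N \<Longrightarrow> f i \<in> carrier G \<and> \<not> graph_dist_le V E (act (f i) b) x \<delta> \<and>
      act (f i) b \<in> branch x (if i < N then n else act c n)"
    and separated: "\<And>i i'. i < 2 * N \<Longrightarrow> i' < 2 * N \<Longrightarrow> i \<noteq> i' \<Longrightarrow>
      act (f i') b \<notin> stab_orbit x (act (f i) b)"
begin

definition translate :: "int \<times> nat \<Rightarrow> 'g" where
  "translate = (\<lambda>(j, i). z [^] j \<otimes> f i)"

lemma x_in_V: "x \<in> V" and n_in_V: "n \<in> V"
  using edge edge_vertices by auto

lemma translate_closed: "i < 2 * N \<Longrightarrow> translate (j, i) \<in> carrier G"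
  using z(1) points by (simp add: translate_def)

lemma translate_inj: "inj_on translate (UNIV \<times> {..<2 * N})"
  unfolding translate_def by (rule stab_translates_inj[OF x_in_V b z(1-3)]) (use points separated in auto)

lemma act_translate: "i < 2 * N \<Longrightarrow> act (translate (j, i)) b = act (z [^] j) (act (f i) b)"
  using z(1) points b by (simp add: translate_def act_mult)

lemma translate_not_in_wall: "i < 2 * N \<Longrightarrow> translate (j, i) \<notin> wall b x \<delta>"
  using act_dist_le_iff[OF int_pow_closed[OF z(1)] act_closed[OF _ b] x_in_V] points
    act_int_pow_fixed[OF x_in_V z(1) z(3)]
  by (simp add: wall_def act_translate)

lemma translate_branch:
  assumes i: "i < 2 * N"
  shows "act (translate (j, i)) b \<in> branch x (if i < N then n else act c n)"
proof -
  have "act (z [^] j) (act c n) = act c n"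
    using stabilizer_commute[OF x_in_V int_pow_closed[OF z(1)] c(1) act_int_pow_fixed[OF x_in_V z(1) z(3)] c(2)]
      act_int_pow_fixed[OF n_in_V z(1) z(4)] c(1) z(1) n_in_V by (metis act_mult int_pow_closed)
  moreover have "act (z [^] j) n = n"
    using act_int_pow_fixed[OF n_in_V z(1) z(4)] by auto
  moreover note zbranch = act_branch[OF int_pow_closed[OF z(1)] x_in_V, of "act (f i) b" _ j]
  ultimately show ?thesis
    using points[OF i] act_int_pow_fixed[OF x_in_V z(1) z(3)]
    by (cases "i < N") (metis act_translate[OF i])+
qed

lemma walk_between_translates_meets_wall:
  assumes p: "graph_walk (carrier G) CE p" "hd p = translate (j, i)" "last p = translate (j', i')"
    and i: "i < N" "N \<le> i'" "i' < 2 * N"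
  shows "set p \<inter> wall b x \<delta> \<noteq> {}"
proof -
  have "(x, act c n) \<in> E" using act_edge[OF c(1) edge] c(2) by simp
  moreover have "act (hd p) b \<in> branch x n" "act (last p) b \<in> branch x (act c n)"
    using translate_branch[of i j] translate_branch[of i' j'] p(2,3) i by auto
  ultimately show ?thesis
    using cayley_walk_meets_wall[OF b \<delta> edge _ c(3)[symmetric] p(1)] unfolding wall_def
    using graph_walk_vertices[OF p(1)] by blast
qed

lemma matching_distance_bound:
  obtains k where "\<And>i. i < N \<Longrightarrow> graph_dist_le (carrier G) CE (f i) (f (N + i)) k"
proof (rule finite_common_bound[of "{..<N}"])
  fix i assume "i \<in> {..<N}"
  then have "f i \<in> carrier G" "f (N + i) \<in> carrier G" using points by auto
  then show "\<exists>k. graph_dist_le (carrier G) CE (f i) (f (N + i)) k"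
    using in_some_word_ball cayley_dist_le_iff by (meson inv_closed m_closed)
qed (auto intro: graph_dist_le_mono)

definition near_wall :: "nat \<Rightarrow> nat \<Rightarrow> 'g set" where
  "near_wall L r = {g \<in> wall b x \<delta>. \<exists>j::int. \<bar>j\<bar> \<le> L \<and>
    z [^] j \<otimes> g \<in> (\<Union>i<N. (\<lambda>w. f i \<otimes> w) ` word_ball G S r)}"

text \<open>An element of the wall within distance \<open>r\<close> of the translate \<open>z^j f_i\<close> is moved by \<open>z^{-j}\<close>
  into the set \<open>f_i B_r\<close>, where \<open>B_r\<close> is the ball of radius \<open>r\<close> of the word metric.\<close>

lemma wall_near_translates:
  "{g \<in> wall b x \<delta>. \<exists>u\<in>translate ` ({-int L..int L} \<times> {..<N}). graph_dist_le (carrier G) CE u g r}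
    \<subseteq> near_wall L r"
proof
  fix g assume "g \<in> {g \<in> wall b x \<delta>. \<exists>u\<in>translate ` ({-int L..int L} \<times> {..<N}). graph_dist_le (carrier G) CE u g r}"
  then obtain j i where g: "g \<in> wall b x \<delta>" "(j, i) \<in> {-int L..int L} \<times> {..<N}"
    "graph_dist_le (carrier G) CE (translate (j, i)) g r"
    by auto
  then have ji: "\<bar>- j\<bar> \<le> int L" "i < N" by auto
  have fi: "f i \<in> carrier G" and gc: "g \<in> carrier G" using points ji(2) g(1) by (auto simp: wall_def)
  then have "inv (translate (j, i)) \<otimes> g \<in> word_ball G S r"
    using cayley_dist_le_iff translate_closed ji(2) g(3) by simp
  moreover have "z [^] (- j) \<otimes> g = f i \<otimes> (inv (translate (j, i)) \<otimes> g)"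
    using z(1) fi gc by (simp add: translate_def inv_mult_group int_pow_neg m_assoc[symmetric])
  ultimately show "g \<in> near_wall L r" unfolding near_wall_def using g(1) ji by blast
qed

lemma card_translates: "card (translate ` ({-int L..int L} \<times> {..<N})) = (2 * L + 1) * N"
proof -
  have "{-int L..int L} \<times> {..<N} \<subseteq> UNIV \<times> {..<2 * N}" by auto
  then have "card (translate ` ({-int L..int L} \<times> {..<N})) = card ({-int L..int L} \<times> {..<N})"
    using card_image inj_on_subset[OF translate_inj] by blast
  also have "\<dots> = (2 * L + 1) * N" by (simp add: card_cartesian_product nat_add_distrib nat_mult_distrib)
  finally show ?thesis .
qed

lemma translate_shift_dist:
  assumes k: "\<And>i. i < N \<Longrightarrow> graph_dist_le (carrier G) CE (f i) (f (N + i)) k" and i: "i < N"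
  shows "graph_dist_le (carrier G) CE (translate (j, i)) (translate (j, N + i)) k"
  using cayley_dist_le_left_mult[OF int_pow_closed[OF z(1)] _ _ k[OF i]] points i
  by (simp add: translate_def)

lemma translates_bij:
  fixes L :: nat
  defines "D \<equiv> {-int L..int L} \<times> {..<N}" and "D' \<equiv> {-int L..int L} \<times> {N..<2 * N}"
  shows "bij_betw (translate \<circ> (\<lambda>(j, i). (j, N + i)) \<circ> inv_into D translate) (translate ` D) (translate ` D')"
    and "translate ` D \<inter> translate ` D' = {}"
proof -
  have DD: "D \<subseteq> UNIV \<times> {..<2 * N}" "D' \<subseteq> UNIV \<times> {..<2 * N}" "D \<inter> D' = {}"
    unfolding D_def D'_def by auto
  have inv: "bij_betw (inv_into D translate) (translate ` D) D"
    using inj_on_subset[OF translate_inj DD(1)] by (simp add: bij_betw_inv_into inj_on_imp_bij_betw)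
  have shift: "bij_betw (\<lambda>(j, i). (j, N + i)) D D'"
  proof (rule bij_betw_imageI)
    show "inj_on (\<lambda>(j, i). (j, N + i)) D" by (auto simp: inj_on_def)
    have "(j, i) \<in> (\<lambda>(j, i). (j, N + i)) ` D" if "(j, i) \<in> D'" for j i
      using that unfolding D_def D'_def by (auto intro!: image_eqI[of _ _ "(j, i - N)"])
    then show "(\<lambda>(j, i). (j, N + i)) ` D = D'" unfolding D_def D'_def by auto
  qed
  have "bij_betw translate D' (translate ` D')"
    using inj_on_subset[OF translate_inj DD(2)] by (simp add: inj_on_imp_bij_betw)
  then show "bij_betw (translate \<circ> (\<lambda>(j, i). (j, N + i)) \<circ> inv_into D translate) (translate ` D) (translate ` D')"
    by (rule bij_betw_trans[OF inv bij_betw_trans[OF shift]])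
  show "translate ` D \<inter> translate ` D' = {}"
    using inj_on_image_Int[OF translate_inj DD(1,2)] DD(3) by simp
qed

lemma translates_walled_matching:
  fixes L M k r m C :: nat
  assumes k: "\<And>i. i < N \<Longrightarrow> graph_dist_le (carrier G) CE (f i) (f (N + i)) k"
    and thin: "finite (near_wall L r)" "card (near_wall L r) \<le> C * (L + M + 1)"
    and L: "M < L" and N: "m * C < N"
  defines "D \<equiv> {-int L..int L} \<times> {..<N}"
  shows "walled_matching (carrier G) CE (wall b x \<delta>) m k r (translate ` D)
    (translate ` ({-int L..int L} \<times> {N..<2 * N})) (translate \<circ> (\<lambda>(j, i). (j, N + i)) \<circ> inv_into D translate)"
  unfolding walled_matching_def
proof (intro conjI allI impI)
  let ?U = "translate ` D" and ?W = "translate ` ({-int L..int L} \<times> {N..<2 * N})"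
  let ?F = "{g \<in> wall b x \<delta>. \<exists>u\<in>?U. graph_dist_le (carrier G) CE u g r}"
  show "?U \<subseteq> carrier G" "?W \<subseteq> carrier G" unfolding D_def using translate_closed by auto
  show "finite ?U" unfolding D_def by simp
  show "?U \<noteq> {}" using N unfolding D_def by force
  show "?U \<inter> ?W = {}" "bij_betw (translate \<circ> (\<lambda>(j, i). (j, N + i)) \<circ> inv_into D translate) ?U ?W"
    using translates_bij unfolding D_def by blast+
  show "?U \<inter> wall b x \<delta> = {}" "?W \<inter> wall b x \<delta> = {}"
    unfolding D_def using translate_not_in_wall by auto
  show "\<forall>u\<in>?U. graph_dist_le (carrier G) CE u ((translate \<circ> (\<lambda>(j, i). (j, N + i)) \<circ> inv_into D translate) u) k"
  proof
    fix u assume "u \<in> ?U"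
    then obtain j i where ji: "(j, i) \<in> D" "u = translate (j, i)" by auto
    have "D \<subseteq> UNIV \<times> {..<2 * N}" unfolding D_def by auto
    then have "inv_into D translate u = (j, i)"
      using inv_into_f_f[OF inj_on_subset[OF translate_inj] ji(1)] ji(2) by simp
    then show "graph_dist_le (carrier G) CE u ((translate \<circ> (\<lambda>(j, i). (j, N + i)) \<circ> inv_into D translate) u) k"
      using translate_shift_dist[OF k] ji unfolding D_def by auto
  qed
  show "set p \<inter> wall b x \<delta> \<noteq> {}" if "graph_walk (carrier G) CE p \<and> hd p \<in> ?U \<and> last p \<in> ?W" for p
    using that walk_between_translates_meets_wall unfolding D_def by fastforce
  have F: "?F \<subseteq> near_wall L r" using wall_near_translates unfolding D_def .
  then show "finite ?F" using thin(1) by (rule finite_subset)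
  have "m * card ?F \<le> m * (C * (L + M + 1))"
    using card_mono[OF thin(1) F] thin(2) by simp
  also have "\<dots> \<le> m * (C * (2 * L + 1))" using L by (intro mult_le_mono2) simp
  also have "\<dots> = (m * C) * (2 * L + 1)" by (simp only: mult.assoc)
  also have "\<dots> \<le> N * (2 * L + 1)" using N by (intro mult_le_mono1) simp
  finally show "m * card ?F \<le> card ?U" using card_translates unfolding D_def by (simp add: mult.commute)
qed

lemma walled_matchings:
  assumes C: "wall_grows_linearly b x \<delta> z C" and N: "m * C < N"
  shows "\<exists>k. \<forall>r. \<exists>U W \<mu>. walled_matching (carrier G) CE (wall b x \<delta>) m k r U W \<mu>"
proof -
  obtain k where k: "\<And>i. i < N \<Longrightarrow> graph_dist_le (carrier G) CE (f i) (f (N + i)) k"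
    using matching_distance_bound by blast
  have "\<exists>U W \<mu>. walled_matching (carrier G) CE (wall b x \<delta>) m k r U W \<mu>" for r
  proof -
    have "finite (\<Union>i<N. (\<lambda>w. f i \<otimes> w) ` word_ball G S r)" by (simp add: finite_word_ball)
    then obtain M where "\<forall>L. finite (near_wall L r) \<and> card (near_wall L r) \<le> C * (L + M + 1)"
      using C unfolding wall_grows_linearly_def near_wall_def by blast
    then have thin: "finite (near_wall (M + 1) r)" "card (near_wall (M + 1) r) \<le> C * (M + 1 + M + 1)"
      by blast+
    have "M < M + 1" by simp
    from translates_walled_matching[OF k thin this N] show ?thesis by blast
  qed
  then show ?thesis by blast
qed

end

context gbs_cayley
begin

lemma displacement_bound:
  assumes b: "b \<in> V"
  obtains \<delta> where "\<And>s. s \<in> S \<Longrightarrow> graph_dist_le V E b (act s b) \<delta>"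
proof (rule finite_common_bound[of S])
  show "finite S" using generating_set by (simp add: finite_symmetric_generating_set_def)
  show "\<exists>d. graph_dist_le V E b (act s b) d" if "s \<in> S" for s
    using tree_connected[OF b act_closed[OF _ b]] that generators_closed
    unfolding graph_dist_le_def by blast
qed (auto intro: graph_dist_le_mono)

theorem extraterrestrial_cayley_graph: "extraterrestrial_graph (carrier G) CE"
proof -
  obtain x n b c z where cfg: "(x, n) \<in> E" "c \<in> carrier G" "act c x = x" "act c n \<noteq> n" "b \<in> V"
    "infinite (branch x n \<inter> {act g b | g. g \<in> carrier G})"
    "z \<in> carrier G" "z \<noteq> \<one>" "act z x = x" "act z n = n"
    by (rule separating_configuration)
  have x: "x \<in> V" using cfg(1) edge_vertices by blast
  obtain \<delta> where \<delta>: "\<And>s. s \<in> S \<Longrightarrow> graph_dist_le V E b (act s b) \<delta>"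
    using displacement_bound[OF cfg(5)] by blast
  obtain C where C: "wall_grows_linearly b x \<delta> z C"
    using wall_linear_growth[OF x cfg(5,7-9)] by blast
  show ?thesis
  proof (rule extraterrestrial_graphI)
    fix m
    define N where "N = m * C + 1"
    obtain f where f:
      "\<And>i. i < 2 * N \<Longrightarrow> f i \<in> carrier G \<and> \<not> graph_dist_le V E (act (f i) b) x \<delta> \<and>
        act (f i) b \<in> branch x (if i < N then n else act c n)"
      "\<And>i i'. i < 2 * N \<Longrightarrow> i' < 2 * N \<Longrightarrow> i \<noteq> i' \<Longrightarrow> act (f i') b \<notin> stab_orbit x (act (f i) b)"
      using spread_orbit_points[OF x cfg(2,3,5,6), where N = N and \<delta> = \<delta>] by blast
    interpret slab_configuration G V E act S x n b c \<delta> z f N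
      by unfold_locales (use cfg \<delta> f in auto)
    show "\<exists>k. \<forall>r. \<exists>U W \<mu>. walled_matching (carrier G) CE (wall b x \<delta>) m k r U W \<mu>"
      using walled_matchings[OF C] N_def by simp
  qed
qed

end

theorem mainTheorem14:
  fixes G :: "('g, 'b) monoid_scheme"
    and V :: "'v set" and E :: "('v \<times> 'v) set" and act :: "'g \<Rightarrow> 'v \<Rightarrow> 'v"
  assumes "group G"
    and "GBS_action G V E act"
  shows "extraterrestrial_group G"
proof -
  interpret gbs_action G V E act using assms by (rule gbs_action.intro)
  obtain S where S: "finite_symmetric_generating_set G S" by (rule finitely_generated)
  interpret gbs_cayley G V E act S
    using assms S by (simp add: gbs_cayley_def gbs_action_def cayley_graph_def cayley_graph_axioms_def)
  show ?thesis unfolding extraterrestrial_group_def using S extraterrestrial_cayley_graph by blast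
qed

end
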